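(* Let $1/2<\alpha<1$, $m\ge1$, and let $n,k$ be integers with $3\le k\le n-1$. Let $H=C_k\cup P_{n-k}$. Then $\lambda_1(A_\alpha(K_m\vee H))>\lambda_1(A_\alpha(K_m\vee P_n))$.
   Context: All graphs are finite, simple and undirected. $A_\alpha(G)=\alpha D(G)+(1-\alpha)A(G)$ with $A(G)$ the adjacency and $D(G)$ the degree matrix; $\lambda_1$ denotes the largest eigenvalue. $C_k$ is the cycle and $P_j$ the path on the indicated number of vertices, $\cup$ is disjoint union, $K_m$ the complete graph, and $\vee$ the join (disjoint union plus all edges between the two vertex sets). *)

theory Defs
  imports "Jordan_Normal_Form.Char_Poly"
begin

(* A finite simple graph on vertex set {0..<N}: (N, adjacency relation).
   The adjacency relation is symmetric, irreflexive and only relates vertices < N. *)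
type_synonym sgraph = "nat \<times> (nat \<Rightarrow> nat \<Rightarrow> bool)"

definition verts :: "sgraph \<Rightarrow> nat" where "verts G = fst G"
definition adj :: "sgraph \<Rightarrow> nat \<Rightarrow> nat \<Rightarrow> bool" where "adj G = snd G"

definition complete_graph :: "nat \<Rightarrow> sgraph" where
  "complete_graph m = (m, \<lambda>i j. i < m \<and> j < m \<and> i \<noteq> j)"

definition path_graph :: "nat \<Rightarrow> sgraph" where
  "path_graph p = (p, \<lambda>i j. i < p \<and> j < p \<and> (j = i + 1 \<or> i = j + 1))"

definition cycle_graph :: "nat \<Rightarrow> sgraph" where
  "cycle_graph k = (k, \<lambda>i j. i < k \<and> j < k \<and> (j = (i + 1) mod k \<or> i = (j + 1) mod k))"

definition disj_union :: "sgraph \<Rightarrow> sgraph \<Rightarrow> sgraph" where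
  "disj_union G H = (verts G + verts H, \<lambda>i j.
      (i < verts G \<and> j < verts G \<and> adj G i j) \<or>
      (verts G \<le> i \<and> verts G \<le> j \<and> i < verts G + verts H \<and> j < verts G + verts H
        \<and> adj H (i - verts G) (j - verts G)))"

definition join :: "sgraph \<Rightarrow> sgraph \<Rightarrow> sgraph" where
  "join G H = (verts G + verts H, \<lambda>i j.
      adj (disj_union G H) i j \<or>
      (i < verts G \<and> verts G \<le> j \<and> j < verts G + verts H) \<or>
      (j < verts G \<and> verts G \<le> i \<and> i < verts G + verts H))"

definition degree :: "sgraph \<Rightarrow> nat \<Rightarrow> nat" where
  "degree G i = card {j. j < verts G \<and> adj G i j}"

definition A_alpha :: "real \<Rightarrow> sgraph \<Rightarrow> real mat" where
  "A_alpha \<alpha> G = mat (verts G) (verts G) (\<lambda>(i, j).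
      \<alpha> * (if i = j then real (degree G i) else 0) + (1 - \<alpha>) * (if adj G i j then 1 else 0))"

definition lambda1 :: "real mat \<Rightarrow> real" where
  "lambda1 M = Max {x. eigenvalue M x}"

end

theory Submission
  imports Defs "Jordan_Normal_Form.Spectral_Radius"
begin

text \<open>Both matrices are positive semidefinite for \<open>\<alpha> \<ge> 1/2\<close>, and for such real symmetric
  matrices \<open>lambda1\<close> is the maximum of the Rayleigh quotient, attained only at eigenvectors.
  The top eigenvector \<open>x\<close> of \<open>A_alpha (K\<^sub>m \<vee> P\<^sub>n)\<close> can be chosen positive and symmetric
  under the reversal of the path, and a relabelling argument shows that its path entries
  strictly increase towards the middle. Cutting a cycle \<open>C\<^sub>k\<close> out of the middle of the path
  and relabelling \<open>x\<close> accordingly removes two edges and adds two, which changes the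
  quadratic form by \<open>2 (1 - \<alpha>)\<close> times a product of two differences of entries of the
  same sign. So the relabelled vector has Rayleigh quotient at least \<open>lambda1\<close> for
  \<open>K\<^sub>m \<vee> (C\<^sub>k \<union> P\<^bsub>n - k\<^esub>)\<close>; it is not an eigenvector, hence the largest eigenvalue is
  strictly bigger.\<close>

section \<open>Real symmetric matrices\<close>

definition sym_mat :: "'a mat \<Rightarrow> nat \<Rightarrow> bool" where
  "sym_mat M N \<longleftrightarrow> M \<in> carrier_mat N N \<and> (\<forall>i<N. \<forall>j<N. M $$ (i, j) = M $$ (j, i))"

definition quad_form :: "'a :: comm_semiring_0 mat \<Rightarrow> 'a vec \<Rightarrow> 'a" where
  "quad_form M v = v \<bullet> (M *\<^sub>v v)"

definition psd_mat :: "real mat \<Rightarrow> nat \<Rightarrow> bool" where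
  "psd_mat M N \<longleftrightarrow> (\<forall>v \<in> carrier_vec N. quad_form M v \<ge> 0)"

lemma sym_mat_carrier: "sym_mat M N \<Longrightarrow> M \<in> carrier_mat N N"
  unfolding sym_mat_def by simp

lemma sym_mat_index: "sym_mat M N \<Longrightarrow> i < N \<Longrightarrow> j < N \<Longrightarrow> M $$ (i, j) = M $$ (j, i)"
  unfolding sym_mat_def by simp

lemma scalar_prod_sum:
  "v \<in> carrier_vec N \<Longrightarrow> w \<in> carrier_vec N \<Longrightarrow> v \<bullet> w = (\<Sum>i<N. v $ i * w $ i)"
  by (auto simp: scalar_prod_def atLeast0LessThan)

lemma mult_mat_vec_index_sum:
  assumes "M \<in> carrier_mat N N" "v \<in> carrier_vec N" "i < N"
  shows "(M *\<^sub>v v) $ i = (\<Sum>j<N. M $$ (i, j) * v $ j)"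
  using assms by (auto simp: mult_mat_vec_def scalar_prod_def row_def atLeast0LessThan)

lemma nonzero_vec_index:
  assumes "v \<in> carrier_vec N" "v \<noteq> 0\<^sub>v N"
  obtains i where "i < N" "v $ i \<noteq> 0"
  using assms by (metis eq_vecI carrier_vecD index_zero_vec)

lemma scalar_prod_self_pos:
  fixes v :: "real vec"
  assumes v: "v \<in> carrier_vec N" and nz: "v \<noteq> 0\<^sub>v N"
  shows "v \<bullet> v > 0"
proof -
  have "conjugate v = v" by (rule eq_vecI) auto
  then show ?thesis
    using conjugate_square_ge_0_vec[of v] conjugate_square_eq_0_vec[OF v] nz by simp
qed

lemma scalar_prod_square_le:
  fixes u v :: "real vec"
  assumes u: "u \<in> carrier_vec N" and v: "v \<in> carrier_vec N"
  shows "(v \<bullet> u)\<^sup>2 \<le> (u \<bullet> u) * (v \<bullet> v)"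
proof (cases "v = 0\<^sub>v N")
  case False
  have pos: "v \<bullet> v > 0" by (rule scalar_prod_self_pos[OF v False])
  define t where "t = (v \<bullet> u) / (v \<bullet> v)"
  have "0 \<le> (\<Sum>i<N. (u $ i - t * v $ i)\<^sup>2)" by (rule sum_nonneg) simp
  also have "\<dots> = (\<Sum>i<N. u$i * u$i) - 2 * t * (\<Sum>i<N. v$i * u$i) + t\<^sup>2 * (\<Sum>i<N. v$i * v$i)"
    by (simp add: power2_eq_square algebra_simps sum_subtractf sum_distrib_left sum.distrib)
  also have "\<dots> = u \<bullet> u - (v \<bullet> u)\<^sup>2 / (v \<bullet> v)"
    using u v pos by (simp add: scalar_prod_sum t_def field_simps power2_eq_square)
  finally show ?thesis using pos by (simp add: field_simps)
qed (use u in simp)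

lemma pow_mat_add: "A \<in> carrier_mat N N \<Longrightarrow> A ^\<^sub>m (p + q) = A ^\<^sub>m p * A ^\<^sub>m q"
proof (induction q)
  case (Suc q)
  have "A ^\<^sub>m (p + Suc q) = (A ^\<^sub>m p * A ^\<^sub>m q) * A" using Suc by simp
  also have "\<dots> = A ^\<^sub>m p * (A ^\<^sub>m q * A)"
    using Suc.prems by (intro assoc_mult_mat[of _ N N _ N]) auto
  finally show ?case by simp
qed simp

lemma sym_mat_adjoint:
  fixes M :: "'a :: comm_semiring_0 mat"
  assumes S: "sym_mat M N" and u: "u \<in> carrier_vec N" and w: "w \<in> carrier_vec N"
  shows "(M *\<^sub>v u) \<bullet> w = u \<bullet> (M *\<^sub>v w)"
proof -
  have M: "M \<in> carrier_mat N N" by (rule sym_mat_carrier[OF S])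
  have "transpose_mat M = M"
    using M sym_mat_index[OF S] by (intro eq_matI) auto
  then show ?thesis using transpose_vec_mult_scalar[OF M w u] by simp
qed

lemma sym_mat_pow_adjoint:
  fixes M :: "'a :: comm_semiring_1 mat"
  assumes S: "sym_mat M N" and u: "u \<in> carrier_vec N" and w: "w \<in> carrier_vec N"
  shows "(M ^\<^sub>m p *\<^sub>v u) \<bullet> w = u \<bullet> (M ^\<^sub>m p *\<^sub>v w)"
  using u w
proof (induction p arbitrary: u w)
  case 0
  then show ?case using sym_mat_carrier[OF S] by simp
next
  case (Suc p)
  have M: "M \<in> carrier_mat N N" by (rule sym_mat_carrier[OF S])
  have pow: "M ^\<^sub>m Suc p = M * M ^\<^sub>m p" using pow_mat_add[OF M, of 1 p] M by simp
  have "(M ^\<^sub>m Suc p *\<^sub>v u) \<bullet> w = (M *\<^sub>v (M ^\<^sub>m p *\<^sub>v u)) \<bullet> w"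
    unfolding pow using M Suc.prems by (simp add: assoc_mult_mat_vec[of _ N N _ N])
  also have "\<dots> = (M ^\<^sub>m p *\<^sub>v u) \<bullet> (M *\<^sub>v w)"
    using M Suc.prems by (intro sym_mat_adjoint[OF S] mult_mat_vec_carrier[OF pow_carrier_mat[OF M]])
  also have "\<dots> = u \<bullet> (M ^\<^sub>m p *\<^sub>v (M *\<^sub>v w))" using Suc.IH Suc.prems M by simp
  also have "\<dots> = u \<bullet> (M ^\<^sub>m Suc p *\<^sub>v w)"
    using M Suc.prems by (simp add: assoc_mult_mat_vec[of _ N N _ N])
  finally show ?case .
qed

lemma sym_mat_pow_quad_form_square_le:
  fixes M :: "real mat"
  assumes S: "sym_mat M N" and v: "v \<in> carrier_vec N"
  shows "(v \<bullet> (M ^\<^sub>m p *\<^sub>v v))\<^sup>2 \<le> (v \<bullet> v) * (v \<bullet> (M ^\<^sub>m (p + p) *\<^sub>v v))"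
proof -
  have M: "M \<in> carrier_mat N N" by (rule sym_mat_carrier[OF S])
  define u where "u = M ^\<^sub>m p *\<^sub>v v"
  have u: "u \<in> carrier_vec N" unfolding u_def by (rule mult_mat_vec_carrier[OF pow_carrier_mat[OF M] v])
  have "v \<bullet> (M ^\<^sub>m (p + p) *\<^sub>v v) = v \<bullet> (M ^\<^sub>m p *\<^sub>v u)"
    unfolding u_def pow_mat_add[OF M] using M v by (simp add: assoc_mult_mat_vec[of _ N N _ N])
  also have "\<dots> = u \<bullet> u" using sym_mat_pow_adjoint[OF S v u, of p] by (simp add: u_def)
  finally show ?thesis using scalar_prod_square_le[OF u v] by (simp add: u_def mult.commute)
qed

lemma quad_form_le_abs_sum:
  fixes A :: "real mat"
  assumes A: "A \<in> carrier_mat N N" and v: "v \<in> carrier_vec N"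
    and c: "\<And>i j. i < N \<Longrightarrow> j < N \<Longrightarrow> \<bar>A $$ (i, j)\<bar> \<le> c"
  shows "quad_form A v \<le> c * (\<Sum>i<N. \<bar>v $ i\<bar>)\<^sup>2"
proof -
  have "quad_form A v = (\<Sum>i<N. \<Sum>j<N. v $ i * A $$ (i, j) * v $ j)"
    using A v by (simp add: quad_form_def scalar_prod_sum[of _ N] mult_mat_vec_index_sum
        sum_distrib_left mult_ac)
  also have "\<dots> \<le> (\<Sum>i<N. \<Sum>j<N. c * (\<bar>v $ i\<bar> * \<bar>v $ j\<bar>))"
  proof (intro sum_mono)
    fix i j assume ij: "i \<in> {..<N}" "j \<in> {..<N}"
    have "v $ i * A $$ (i, j) * v $ j \<le> \<bar>v $ i\<bar> * \<bar>v $ j\<bar> * \<bar>A $$ (i, j)\<bar>"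
      using abs_ge_self[of "v $ i * A $$ (i, j) * v $ j"] by (simp add: abs_mult mult_ac)
    also have "\<dots> \<le> \<bar>v $ i\<bar> * \<bar>v $ j\<bar> * c" using c ij by (intro mult_left_mono) auto
    finally show "v $ i * A $$ (i, j) * v $ j \<le> c * (\<bar>v $ i\<bar> * \<bar>v $ j\<bar>)" by (simp add: mult_ac)
  qed
  also have "\<dots> = c * (\<Sum>i<N. \<bar>v $ i\<bar>)\<^sup>2"
    by (simp add: power2_eq_square sum_distrib_left sum_product mult_ac)
  finally show ?thesis .
qed

text \<open>If \<open>b k\<close> is the Rayleigh quotient of \<open>M ^ k\<close> at \<open>v\<close>, the previous lemma gives
  \<open>b 1 ^ 2 ^ j \<le> b (2 ^ j)\<close>, which is bounded; hence \<open>b 1 \<le> 1\<close>.\<close>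

lemma quad_form_le_of_pow_bounded:
  fixes M :: "real mat"
  assumes S: "sym_mat M N" and v: "v \<in> carrier_vec N"
    and c: "\<And>k i j. i < N \<Longrightarrow> j < N \<Longrightarrow> \<bar>(M ^\<^sub>m k) $$ (i, j)\<bar> \<le> c"
  shows "quad_form M v \<le> v \<bullet> v"
proof (rule ccontr)
  assume gt: "\<not> quad_form M v \<le> v \<bullet> v"
  have M: "M \<in> carrier_mat N N" by (rule sym_mat_carrier[OF S])
  have pos: "v \<bullet> v > 0"
    using gt M by (intro scalar_prod_self_pos[OF v]) (auto simp: quad_form_def)
  define b where "b k = v \<bullet> (M ^\<^sub>m k *\<^sub>v v) / (v \<bullet> v)" for k
  have b1: "b 1 > 1" using gt pos M by (simp add: b_def quad_form_def)
  have double: "b p ^ 2 \<le> b (p + p)" for p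
  proof -
    have "b p ^ 2 = (v \<bullet> (M ^\<^sub>m p *\<^sub>v v))\<^sup>2 / (v \<bullet> v)\<^sup>2"
      by (simp add: b_def power_divide)
    also have "\<dots> \<le> (v \<bullet> v) * (v \<bullet> (M ^\<^sub>m (p + p) *\<^sub>v v)) / (v \<bullet> v)\<^sup>2"
      by (rule divide_right_mono[OF sym_mat_pow_quad_form_square_le[OF S v]]) simp
    also have "\<dots> = b (p + p)" using pos by (simp add: b_def power2_eq_square)
    finally show ?thesis .
  qed
  have pow2: "b 1 ^ 2 ^ j \<le> b (2 ^ j)" for j
  proof (induction j)
    case (Suc j)
    have "b 1 ^ 2 ^ Suc j = (b 1 ^ 2 ^ j)\<^sup>2" by (simp add: power_mult[symmetric] mult.commute)
    also have "\<dots> \<le> b (2 ^ j) ^ 2" using Suc b1 by (intro power_mono) auto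
    also have "\<dots> \<le> b (2 ^ Suc j)" using double[of "2 ^ j"] by (simp add: mult_2)
    finally show ?case .
  qed simp
  define B where "B = c * (\<Sum>i<N. \<bar>v $ i\<bar>)\<^sup>2 / (v \<bullet> v)"
  have bound: "b k \<le> B" for k
    using quad_form_le_abs_sum[OF pow_carrier_mat[OF M] v c] pos
    by (simp add: b_def B_def quad_form_def divide_right_mono)
  obtain j where j: "B < b 1 ^ j" using real_arch_pow[OF b1] by auto
  have "b 1 ^ j \<le> b 1 ^ 2 ^ j" using b1 by (intro power_increasing) auto
  with pow2[of j] bound[of "2 ^ j"] j show False by linarith
qed

lemma smult_mat_mult_vec:
  assumes "M \<in> carrier_mat nr nc" "v \<in> carrier_vec nc"
  shows "(t \<cdot>\<^sub>m M) *\<^sub>v v = t \<cdot>\<^sub>v (M *\<^sub>v v)"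
  using assms by (intro eq_vecI) (auto simp: scalar_prod_def sum_distrib_left mult.assoc)

lemma eigenvalue_smult_mat:
  fixes M :: "'a :: field mat"
  assumes M: "M \<in> carrier_mat N N" and ev: "eigenvalue (t \<cdot>\<^sub>m M) \<mu>" and t: "t \<noteq> 0"
  shows "eigenvalue M (\<mu> / t)"
proof -
  obtain v where v: "v \<in> carrier_vec N" "v \<noteq> 0\<^sub>v N" and tMv: "(t \<cdot>\<^sub>m M) *\<^sub>v v = \<mu> \<cdot>\<^sub>v v"
    using ev M unfolding eigenvalue_def eigenvector_def by auto
  have "M *\<^sub>v v = (1 / t) \<cdot>\<^sub>v ((t \<cdot>\<^sub>m M) *\<^sub>v v)"
    using M v t by (simp add: smult_mat_mult_vec smult_smult_assoc)
  also have "\<dots> = (\<mu> / t) \<cdot>\<^sub>v v" unfolding tMv by (simp add: smult_smult_assoc)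
  finally show ?thesis using M v unfolding eigenvalue_def eigenvector_def by auto
qed

lemma real_eigenvalue_of_complexified:
  fixes M :: "real mat"
  assumes M: "M \<in> carrier_mat N N"
    and ev: "eigenvalue (map_mat complex_of_real M) (complex_of_real r)"
  shows "eigenvalue M r"
proof -
  let ?C = "map_mat complex_of_real M"
  have C: "?C \<in> carrier_mat N N" using M by simp
  obtain v where v: "v \<in> carrier_vec N" "v \<noteq> 0\<^sub>v N"
    and Cv: "?C *\<^sub>v v = complex_of_real r \<cdot>\<^sub>v v"
    using ev M unfolding eigenvalue_def eigenvector_def by auto
  have parts: "M *\<^sub>v map_vec f v = r \<cdot>\<^sub>v map_vec f v" if f: "f = Re \<or> f = Im" for f
  proof (rule eq_vecI)
    fix i assume "i < dim_vec (r \<cdot>\<^sub>v map_vec f v)"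
    then have i: "i < N" using v by simp
    have "(\<Sum>j<N. complex_of_real (M $$ (i, j)) * v $ j) = complex_of_real r * v $ i"
      using arg_cong[OF Cv, of "\<lambda>w. w $ i"] mult_mat_vec_index_sum[OF C v(1) i] M v i by simp
    from arg_cong[OF this, of f]
    show "(M *\<^sub>v map_vec f v) $ i = (r \<cdot>\<^sub>v map_vec f v) $ i"
      using f M v i by (auto simp del: index_mult_mat_vec simp: mult_mat_vec_index_sum Re_sum Im_sum)
  qed (use M v in simp)
  obtain i where i: "i < N" "v $ i \<noteq> 0" using v by (rule nonzero_vec_index)
  then obtain f where f: "f = Re \<or> f = Im" "f (v $ i) \<noteq> 0"
    using complex_eq_iff zero_complex.sel by metis
  have "map_vec f v \<noteq> 0\<^sub>v N" using f(2) i v by (metis index_map_vec(1) index_zero_vec(1) carrier_vecD)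
  then show ?thesis using parts[OF f(1)] M v unfolding eigenvalue_def eigenvector_def
    by (intro exI[of _ "map_vec f v"]) auto
qed

lemma sym_mat_complex_eigenvalue:
  fixes M :: "real mat"
  assumes S: "sym_mat M N" and ev: "eigenvalue (map_mat complex_of_real M) \<mu>"
  shows "Im \<mu> = 0" "eigenvalue M (Re \<mu>)"
proof -
  have M: "M \<in> carrier_mat N N" by (rule sym_mat_carrier[OF S])
  let ?C = "map_mat complex_of_real M"
  have C: "?C \<in> carrier_mat N N" using M by simp
  obtain v where v: "v \<in> carrier_vec N" "v \<noteq> 0\<^sub>v N" and Cv: "?C *\<^sub>v v = \<mu> \<cdot>\<^sub>v v"
    using ev M unfolding eigenvalue_def eigenvector_def by auto
  have row: "(\<Sum>j<N. complex_of_real (M $$ (i, j)) * v $ j) = \<mu> * v $ i" if "i < N" for i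
    using arg_cong[OF Cv, of "\<lambda>w. w $ i"] mult_mat_vec_index_sum[OF C v(1) that] M v that by simp
  define s where "s = (\<Sum>i<N. \<Sum>j<N. cnj (v $ i) * complex_of_real (M $$ (i, j)) * v $ j)"
  define r where "r = (\<Sum>i<N. (cmod (v $ i))\<^sup>2)"
  have s_eq: "s = \<mu> * complex_of_real r"
  proof -
    have "s = (\<Sum>i<N. cnj (v $ i) * (\<Sum>j<N. complex_of_real (M $$ (i, j)) * v $ j))"
      unfolding s_def by (simp add: sum_distrib_left mult.assoc)
    also have "\<dots> = (\<Sum>i<N. \<mu> * (cnj (v $ i) * v $ i))"
      by (intro sum.cong) (simp_all add: row)
    also have "\<dots> = \<mu> * complex_of_real r"
      unfolding r_def of_real_sum sum_distrib_left
      by (intro sum.cong) (simp_all only: of_real_power complex_norm_square[symmetric] mult.commute)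
    finally show ?thesis .
  qed
  have "cnj s = s"
  proof -
    have "cnj s = (\<Sum>i<N. \<Sum>j<N. v $ i * complex_of_real (M $$ (i, j)) * cnj (v $ j))"
      unfolding s_def by (simp add: cnj_sum)
    also have "\<dots> = (\<Sum>j<N. \<Sum>i<N. v $ i * complex_of_real (M $$ (i, j)) * cnj (v $ j))"
      by (rule sum.swap)
    also have "\<dots> = s" unfolding s_def
      by (intro sum.cong refl) (auto simp: sym_mat_index[OF S] mult.commute mult.left_commute)
    finally show ?thesis .
  qed
  moreover have "r > 0"
  proof -
    obtain i where i: "i < N" "v $ i \<noteq> 0" using v by (rule nonzero_vec_index)
    have "(cmod (v $ i))\<^sup>2 \<le> r" unfolding r_def using i by (intro member_le_sum) auto
    moreover have "(cmod (v $ i))\<^sup>2 > 0" using i by simp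
    ultimately show ?thesis by linarith
  qed
  ultimately have "cnj \<mu> = \<mu>"
    using s_eq by (metis complex_cnj_complex_of_real complex_cnj_mult mult_cancel_right
        of_real_eq_0_iff less_irrefl)
  then show "Im \<mu> = 0" by (metis Reals_cnj_iff complex_is_Real_iff)
  then have "\<mu> = complex_of_real (Re \<mu>)" by (simp add: complex_eq_iff)
  with ev show "eigenvalue M (Re \<mu>)" by (metis real_eigenvalue_of_complexified[OF M])
qed

lemma sym_mat_has_eigenvalue:
  fixes M :: "real mat"
  assumes S: "sym_mat M N" and N: "N > 0"
  shows "\<exists>\<mu>. eigenvalue M \<mu>"
proof -
  have M: "M \<in> carrier_mat N N" by (rule sym_mat_carrier[OF S])
  obtain \<mu> where "\<mu> \<in> spectrum (map_mat complex_of_real M)"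
    using spectrum_non_empty[of "map_mat complex_of_real M" N] M N by auto
  with sym_mat_complex_eigenvalue(2)[OF S] show ?thesis unfolding spectrum_def by auto
qed

lemma sym_mat_pow_bounded:
  fixes M :: "real mat"
  assumes S: "sym_mat M N" and N: "N > 0" and ev: "\<And>\<mu>. eigenvalue M \<mu> \<Longrightarrow> \<bar>\<mu>\<bar> < 1"
  shows "\<exists>c. \<forall>k i j. i < N \<longrightarrow> j < N \<longrightarrow> \<bar>(M ^\<^sub>m k) $$ (i, j)\<bar> \<le> c"
proof -
  have M: "M \<in> carrier_mat N N" by (rule sym_mat_carrier[OF S])
  let ?C = "map_mat complex_of_real M"
  have C: "?C \<in> carrier_mat N N" using M by simp
  obtain \<mu> where \<mu>: "\<mu> \<in> spectrum ?C" and sr: "spectral_radius ?C = cmod \<mu>"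
    using spectral_radius_mem_max(1)[OF C N] by auto
  from \<mu> have "Im \<mu> = 0" "eigenvalue M (Re \<mu>)"
    using sym_mat_complex_eigenvalue[OF S] unfolding spectrum_def by auto
  with ev have "spectral_radius ?C < 1" unfolding sr by (auto simp: cmod_eq_Re)
  from spectral_radius_jnf_norm_bound_less_1_upper_triangular[OF C this]
  obtain c where c: "\<And>k. norm_bound (?C ^\<^sub>m k) c" by auto
  have "\<bar>(M ^\<^sub>m k) $$ (i, j)\<bar> \<le> c" if "i < N" "j < N" for k i j
  proof -
    have "norm ((?C ^\<^sub>m k) $$ (i, j)) \<le> c" using c[of k] that M unfolding norm_bound_def by auto
    also have "?C ^\<^sub>m k = map_mat complex_of_real (M ^\<^sub>m k)"
      by (rule of_real_hom.mat_hom_pow[OF M, symmetric])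
    finally show ?thesis using that M by simp
  qed
  then show ?thesis by blast
qed

lemma psd_mat_eigenvalue_nonneg:
  assumes M: "M \<in> carrier_mat N N" and P: "psd_mat M N" and ev: "eigenvalue M \<mu>"
  shows "\<mu> \<ge> 0"
proof -
  obtain w where w: "w \<in> carrier_vec N" "w \<noteq> 0\<^sub>v N" "M *\<^sub>v w = \<mu> \<cdot>\<^sub>v w"
    using ev M unfolding eigenvalue_def eigenvector_def by auto
  have "0 \<le> quad_form M w" using P w unfolding psd_mat_def by auto
  also have "quad_form M w = \<mu> * (w \<bullet> w)" using w by (simp add: quad_form_def)
  finally show ?thesis using scalar_prod_self_pos[OF w(1,2)] by (simp add: zero_le_mult_iff)
qed

text \<open>Scaling \<open>M\<close> by a \<open>t\<close> above its eigenvalues but below the Rayleigh quotient at \<open>v\<close>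
  yields a matrix with bounded powers whose quadratic form at \<open>v\<close> exceeds \<open>v \<bullet> v\<close>.\<close>

lemma psd_mat_eigenvalue_gt:
  fixes M :: "real mat"
  assumes S: "sym_mat M N" and N: "N > 0" and P: "psd_mat M N" and v: "v \<in> carrier_vec N"
    and gt: "quad_form M v > r * (v \<bullet> v)"
  shows "\<exists>\<mu>. eigenvalue M \<mu> \<and> \<mu> > r"
proof (rule ccontr)
  assume small: "\<nexists>\<mu>. eigenvalue M \<mu> \<and> \<mu> > r"
  have M: "M \<in> carrier_mat N N" by (rule sym_mat_carrier[OF S])
  have r: "r \<ge> 0"
    using sym_mat_has_eigenvalue[OF S N] psd_mat_eigenvalue_nonneg[OF M P] small by force
  have pos: "v \<bullet> v > 0"
    using gt r M by (intro scalar_prod_self_pos[OF v]) (auto simp: quad_form_def)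
  define t where "t = (r + quad_form M v / (v \<bullet> v)) / 2"
  have t: "r < t" "t * (v \<bullet> v) < quad_form M v"
    using gt pos by (simp_all add: t_def field_simps)
  let ?M = "(1 / t) \<cdot>\<^sub>m M"
  have "\<bar>\<mu>\<bar> < 1" if "eigenvalue ?M \<mu>" for \<mu>
  proof -
    have "eigenvalue M (\<mu> * t)"
      using eigenvalue_smult_mat[OF M that] r t by simp
    then have "0 \<le> \<mu> * t" "\<mu> * t \<le> r"
      using psd_mat_eigenvalue_nonneg[OF M P] small by force+
    then show ?thesis using r t by (smt (verit) mult_le_cancel_right1 zero_le_mult_iff)
  qed
  then obtain c where "\<forall>k i j. i < N \<longrightarrow> j < N \<longrightarrow> \<bar>(?M ^\<^sub>m k) $$ (i, j)\<bar> \<le> c"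
    using sym_mat_pow_bounded[of ?M N] S N by (auto simp: sym_mat_def)
  then have "quad_form ?M v \<le> v \<bullet> v"
    using S by (intro quad_form_le_of_pow_bounded[of ?M N v c] v) (auto simp: sym_mat_def)
  moreover have "quad_form ?M v = quad_form M v / t"
    using M v by (simp add: quad_form_def smult_mat_mult_vec[OF M v])
  ultimately show False using t r by (simp add: field_simps)
qed

lemma finite_eigenvalues: "M \<in> carrier_mat N N \<Longrightarrow> finite {\<mu>. eigenvalue (M :: 'a :: field mat) \<mu>}"
  using card_finite_spectrum(1) by (auto simp: spectrum_def)

lemma eigenvalue_le_lambda1: "M \<in> carrier_mat N N \<Longrightarrow> eigenvalue M \<mu> \<Longrightarrow> \<mu> \<le> lambda1 M"
  unfolding lambda1_def by (auto intro: Max_ge finite_eigenvalues)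

lemma eigenvalue_lambda1: "sym_mat M N \<Longrightarrow> N > 0 \<Longrightarrow> eigenvalue M (lambda1 M)"
  unfolding lambda1_def
  using Max_in[OF finite_eigenvalues[OF sym_mat_carrier]] sym_mat_has_eigenvalue by fastforce

lemma lambda1_gt_of_quad_form_gt:
  assumes "sym_mat M N" "N > 0" "psd_mat M N" "v \<in> carrier_vec N"
    and "quad_form M v > r * (v \<bullet> v)"
  shows "lambda1 M > r"
  using psd_mat_eigenvalue_gt[OF assms] eigenvalue_le_lambda1[OF sym_mat_carrier[OF assms(1)]]
  by force

lemma exists_quadratic_pos:
  fixes D U K :: real
  assumes "D \<ge> 0" "U > 0"
  shows "\<exists>t. D + 2 * t * U + t\<^sup>2 * K > 0"
proof -
  define t where "t = U / (\<bar>K\<bar> + 1)"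
  have t: "t > 0" "t * \<bar>K\<bar> \<le> U" using assms by (auto simp: t_def field_simps)
  then have "- (t * U) \<le> t * (t * K)"
    by (smt (verit) abs_mult abs_of_pos mult_minus_right mult_left_mono abs_ge_minus_self)
  moreover have "t * U > 0" using assms t by simp
  moreover have "D + 2 * t * U + t\<^sup>2 * K = D + 2 * (t * U) + t * (t * K)"
    by (simp add: power2_eq_square algebra_simps)
  ultimately have "D + 2 * t * U + t\<^sup>2 * K > 0" using assms by linarith
  then show ?thesis ..
qed

text \<open>Moving from \<open>v\<close> a little in the direction of \<open>M v - r v\<close> increases
  \<open>quad_form M w - r (w \<bullet> w)\<close> to first order by \<open>2 \<bar>M v - r v\<bar>\<^sup>2\<close>.\<close>

lemma quad_form_gt_of_not_eigenvector:
  fixes M :: "real mat"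
  assumes S: "sym_mat M N" and v: "v \<in> carrier_vec N"
    and ge: "quad_form M v \<ge> r * (v \<bullet> v)" and ne: "M *\<^sub>v v \<noteq> r \<cdot>\<^sub>v v"
  shows "\<exists>w \<in> carrier_vec N. quad_form M w > r * (w \<bullet> w)"
proof -
  have M: "M \<in> carrier_mat N N" by (rule sym_mat_carrier[OF S])
  define F where "F f i = (\<Sum>j<N. M $$ (i, j) * f j) - r * f i" for f i
  have excess: "quad_form M (vec N f) - r * (vec N f \<bullet> vec N f) = (\<Sum>i<N. f i * F f i)" for f
    using M by (simp add: quad_form_def F_def scalar_prod_sum[of _ N] mult_mat_vec_index_sum
        sum_distrib_left sum_subtractf algebra_simps)
  have adjoint: "(\<Sum>i<N. a i * F b i) = (\<Sum>i<N. b i * F a i)" for a b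
  proof -
    have "(M *\<^sub>v vec N a) \<bullet> vec N b = vec N a \<bullet> (M *\<^sub>v vec N b)"
      by (rule sym_mat_adjoint[OF S]) auto
    then show ?thesis using M
      by (simp add: F_def scalar_prod_sum[of _ N] mult_mat_vec_index_sum algebra_simps
          sum_subtractf sum_distrib_left)
  qed
  have linear: "F (\<lambda>i. a i + t * b i) i = F a i + t * F b i" for a b t i
    unfolding F_def by (simp add: algebra_simps sum.distrib sum_distrib_left)
  define f where "f i = v $ i" for i
  define u where "u = F f"
  have "\<exists>i<N. u i \<noteq> 0"
  proof (rule ccontr)
    assume "\<not> ?thesis"
    then have "M *\<^sub>v v = r \<cdot>\<^sub>v v"
      using M v by (intro eq_vecI) (auto simp del: index_mult_mat_vec
          simp: mult_mat_vec_index_sum u_def F_def f_def)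
    with ne show False ..
  qed
  then have U: "(\<Sum>i<N. u i * u i) > 0"
    by (metis (no_types) finite_lessThan lessThan_iff sum_pos2 zero_le_square
        not_square_less_zero linorder_neqE_linordered_idom mult_neg_neg mult_pos_pos order_less_imp_le)
  have "vec N f = v" using v by (auto simp: f_def)
  then have D: "(\<Sum>i<N. f i * u i) \<ge> 0"
    using ge excess[of f] by (simp add: u_def)
  obtain t where t: "(\<Sum>i<N. f i * u i) + 2 * t * (\<Sum>i<N. u i * u i) + t\<^sup>2 * (\<Sum>i<N. u i * F u i) > 0"
    using exists_quadratic_pos[OF D U] by blast
  define g where "g i = f i + t * u i" for i
  have "(\<Sum>i<N. g i * F g i)
      = (\<Sum>i<N. f i * u i) + t * (\<Sum>i<N. f i * F u i) + t * (\<Sum>i<N. u i * u i) + t\<^sup>2 * (\<Sum>i<N. u i * F u i)"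
    unfolding g_def linear u_def
    by (simp add: algebra_simps sum.distrib sum_distrib_left power2_eq_square)
  also have "(\<Sum>i<N. f i * F u i) = (\<Sum>i<N. u i * u i)" using adjoint[of f u] by (simp add: u_def)
  finally have "(\<Sum>i<N. g i * F g i) > 0" using t by (simp add: algebra_simps)
  then show ?thesis using excess[of g] by (intro bexI[of _ "vec N g"]) auto
qed

lemma lambda1_gt_of_not_eigenvector:
  assumes S: "sym_mat M N" and N: "N > 0" and P: "psd_mat M N" and v: "v \<in> carrier_vec N"
    and "quad_form M v \<ge> r * (v \<bullet> v)" and "M *\<^sub>v v \<noteq> r \<cdot>\<^sub>v v"
  shows "lambda1 M > r"
  using quad_form_gt_of_not_eigenvector[OF S v assms(5,6)] lambda1_gt_of_quad_form_gt[OF S N P]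
  by blast

lemma eigenvector_of_quad_form_ge_lambda1:
  assumes "sym_mat M N" "N > 0" "psd_mat M N" "v \<in> carrier_vec N"
    and "quad_form M v \<ge> lambda1 M * (v \<bullet> v)"
  shows "M *\<^sub>v v = lambda1 M \<cdot>\<^sub>v v"
  using lambda1_gt_of_not_eigenvector[OF assms] by blast

section \<open>The quadratic form of \<open>A_alpha\<close>\<close>

definition edge_form :: "real \<Rightarrow> real \<Rightarrow> real \<Rightarrow> real" where
  "edge_form \<alpha> a b = \<alpha> * (a\<^sup>2 + b\<^sup>2) + 2 * (1 - \<alpha>) * a * b"

definition edge_sum :: "real \<Rightarrow> (nat \<Rightarrow> nat \<Rightarrow> bool) \<Rightarrow> nat \<Rightarrow> (nat \<Rightarrow> real) \<Rightarrow> real" where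
  "edge_sum \<alpha> E n f = (\<Sum>i<n. \<Sum>j<n. if E i j then edge_form \<alpha> (f i) (f j) else 0)"

lemma edge_form_commute: "edge_form \<alpha> a b = edge_form \<alpha> b a"
  unfolding edge_form_def by (simp add: algebra_simps)

lemma edge_form_nonneg:
  assumes "1/2 \<le> \<alpha>" "\<alpha> \<le> 1"
  shows "edge_form \<alpha> a b \<ge> 0"
proof -
  have "edge_form \<alpha> a b = (1 - \<alpha>) * (a + b)\<^sup>2 + (2 * \<alpha> - 1) * (a\<^sup>2 + b\<^sup>2)"
    unfolding edge_form_def by (simp add: algebra_simps power2_eq_square)
  also have "\<dots> \<ge> 0" using assms by (intro add_nonneg_nonneg mult_nonneg_nonneg) auto
  finally show ?thesis .
qed

lemma edge_form_le_abs:
  assumes "\<alpha> \<le> 1"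
  shows "edge_form \<alpha> a b \<le> edge_form \<alpha> \<bar>a\<bar> \<bar>b\<bar>"
proof -
  have "2 * (1 - \<alpha>) * (a * b) \<le> 2 * (1 - \<alpha>) * (\<bar>a\<bar> * \<bar>b\<bar>)"
    using assms by (intro mult_left_mono) (auto simp: abs_mult[symmetric])
  then show ?thesis by (simp add: edge_form_def mult.assoc)
qed

lemma sum_lessThan_add_split:
  fixes m n :: nat
  shows "(\<Sum>i<m + n. F i) = (\<Sum>i<m. F i) + (\<Sum>h<n. F (m + h))"
  by (induction n) (auto simp: add.assoc)

lemma A_alpha_carrier: "A_alpha \<alpha> G \<in> carrier_mat (verts G) (verts G)"
  by (simp add: A_alpha_def)

lemma A_alpha_index:
  "i < verts G \<Longrightarrow> j < verts G \<Longrightarrow> A_alpha \<alpha> G $$ (i, j) =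
    \<alpha> * (if i = j then real (degree G i) else 0) + (1 - \<alpha>) * (if adj G i j then 1 else 0)"
  by (simp add: A_alpha_def)

lemma A_alpha_sym_mat:
  assumes "\<And>i j. adj G i j = adj G j i"
  shows "sym_mat (A_alpha \<alpha> G) (verts G)"
  using assms unfolding sym_mat_def by (auto simp: A_alpha_index A_alpha_carrier)

lemma degree_as_sum: "real (degree G i) = (\<Sum>j<verts G. if adj G i j then 1 else 0)"
proof -
  have "{j. j < verts G \<and> adj G i j} = {j \<in> {..<verts G}. adj G i j}" by auto
  then have "real (degree G i) = (\<Sum>j \<in> {j \<in> {..<verts G}. adj G i j}. 1)"
    by (simp add: degree_def)
  also have "\<dots> = (\<Sum>j<verts G. if adj G i j then 1 else 0)" by (rule sum.inter_filter) simp
  finally show ?thesis .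
qed

lemma A_alpha_mult_index:
  assumes v: "v \<in> carrier_vec (verts G)" and i: "i < verts G"
  shows "(A_alpha \<alpha> G *\<^sub>v v) $ i = \<alpha> * real (degree G i) * v $ i
     + (1 - \<alpha>) * (\<Sum>j<verts G. if adj G i j then v $ j else 0)"
proof -
  have "(A_alpha \<alpha> G *\<^sub>v v) $ i = (\<Sum>j<verts G. A_alpha \<alpha> G $$ (i, j) * v $ j)"
    by (rule mult_mat_vec_index_sum[OF A_alpha_carrier v i])
  also have "\<dots> = (\<Sum>j<verts G. (if i = j then \<alpha> * real (degree G i) * v $ j else 0)
      + (1 - \<alpha>) * (if adj G i j then v $ j else 0))"
    by (intro sum.cong) (simp_all add: A_alpha_index i algebra_simps)
  also have "\<dots> = \<alpha> * real (degree G i) * v $ i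
     + (1 - \<alpha>) * (\<Sum>j<verts G. if adj G i j then v $ j else 0)"
    using i by (simp add: sum.distrib sum_distrib_left)
  finally show ?thesis .
qed

lemma quad_form_A_alpha:
  assumes sym: "\<And>i j. adj G i j = adj G j i" and v: "v \<in> carrier_vec (verts G)"
  shows "quad_form (A_alpha \<alpha> G) v = edge_sum \<alpha> (adj G) (verts G) (\<lambda>i. v $ i) / 2"
proof -
  let ?N = "verts G"
  define T where "T = (\<Sum>i<?N. \<Sum>j<?N. if adj G i j then \<alpha> * (v$i)\<^sup>2 + (1-\<alpha>) * (v$i * v$j) else 0)"
  have "quad_form (A_alpha \<alpha> G) v = (\<Sum>i<?N. v $ i * (A_alpha \<alpha> G *\<^sub>v v) $ i)"
    unfolding quad_form_def by (rule scalar_prod_sum[OF v mult_mat_vec_carrier[OF A_alpha_carrier v]])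
  also have "\<dots> = T" unfolding T_def
    by (intro sum.cong) (simp_all add: A_alpha_mult_index[OF v] degree_as_sum sum_distrib_left
        sum_distrib_right sum.distrib[symmetric] algebra_simps power2_eq_square if_distrib
        cong: if_cong)
  finally have q: "quad_form (A_alpha \<alpha> G) v = T" .
  have T_swap: "T = (\<Sum>i<?N. \<Sum>j<?N. if adj G i j then \<alpha> * (v$j)\<^sup>2 + (1-\<alpha>) * (v$i * v$j) else 0)"
    unfolding T_def by (subst sum.swap) (auto simp: sym mult.commute intro!: sum.cong)
  have "edge_sum \<alpha> (adj G) ?N (\<lambda>i. v $ i) = (\<Sum>i<?N. \<Sum>j<?N.
      (if adj G i j then \<alpha> * (v$i)\<^sup>2 + (1-\<alpha>) * (v$i * v$j) else 0) +
      (if adj G i j then \<alpha> * (v$j)\<^sup>2 + (1-\<alpha>) * (v$i * v$j) else 0))"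
    unfolding edge_sum_def by (intro sum.cong refl) (simp add: edge_form_def algebra_simps)
  also have "\<dots> = T + T"
    by (subst (2) T_swap) (simp only: T_def sum.distrib)
  finally show ?thesis using q by simp
qed

lemma A_alpha_psd:
  assumes sym: "\<And>i j. adj G i j = adj G j i" and \<alpha>: "1/2 \<le> \<alpha>" "\<alpha> \<le> 1"
  shows "psd_mat (A_alpha \<alpha> G) (verts G)"
  unfolding psd_mat_def
proof
  fix v :: "real vec" assume v: "v \<in> carrier_vec (verts G)"
  have "edge_sum \<alpha> (adj G) (verts G) (\<lambda>i. v $ i) \<ge> 0"
    unfolding edge_sum_def by (intro sum_nonneg) (auto intro: edge_form_nonneg[OF \<alpha>])
  then show "quad_form (A_alpha \<alpha> G) v \<ge> 0" using quad_form_A_alpha[where \<alpha>=\<alpha>, OF sym v] by simp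
qed

lemma quad_form_A_alpha_le_abs:
  assumes sym: "\<And>i j. adj G i j = adj G j i" and v: "v \<in> carrier_vec (verts G)"
    and \<alpha>: "\<alpha> \<le> 1"
  shows "quad_form (A_alpha \<alpha> G) v \<le> quad_form (A_alpha \<alpha> G) (map_vec abs v)"
proof -
  have "edge_sum \<alpha> (adj G) (verts G) (\<lambda>i. v $ i) \<le> edge_sum \<alpha> (adj G) (verts G) (\<lambda>i. \<bar>v $ i\<bar>)"
    unfolding edge_sum_def by (intro sum_mono) (simp add: edge_form_le_abs[OF \<alpha>])
  moreover have "edge_sum \<alpha> (adj G) (verts G) (\<lambda>i. map_vec abs v $ i) = edge_sum \<alpha> (adj G) (verts G) (\<lambda>i. \<bar>v $ i\<bar>)"
    using v unfolding edge_sum_def by (intro sum.cong refl) auto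
  moreover have "map_vec abs v \<in> carrier_vec (verts G)" using v by simp
  ultimately show ?thesis
    using quad_form_A_alpha[where \<alpha>=\<alpha>, OF sym v] quad_form_A_alpha[where \<alpha>=\<alpha>, OF sym, of "map_vec abs v"]
    by simp
qed

section \<open>Joins with a complete graph\<close>

lemma join_complete_verts: "verts (join (complete_graph m) H) = m + verts H"
  by (simp add: join_def verts_def disj_union_def complete_graph_def)

lemma join_complete_adj:
  "adj (join (complete_graph m) H) i j \<longleftrightarrow> (i < m \<and> j < m \<and> i \<noteq> j) \<or>
     (m \<le> i \<and> m \<le> j \<and> i < m + verts H \<and> j < m + verts H \<and> adj H (i - m) (j - m)) \<or>
     (i < m \<and> m \<le> j \<and> j < m + verts H) \<or> (j < m \<and> m \<le> i \<and> i < m + verts H)"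
  by (auto simp: join_def verts_def adj_def disj_union_def complete_graph_def)

lemma join_complete_adj_commute:
  "(\<And>p q. adj H p q = adj H q p) \<Longrightarrow>
    adj (join (complete_graph m) H) i j = adj (join (complete_graph m) H) j i"
  unfolding join_complete_adj by auto

lemma A_alpha_join_complete_sym_mat:
  assumes "\<And>p q. adj H p q = adj H q p"
  shows "sym_mat (A_alpha \<alpha> (join (complete_graph m) H)) (m + verts H)"
  using A_alpha_sym_mat[of "join (complete_graph m) H" \<alpha>] join_complete_adj_commute[OF assms]
  by (simp add: join_complete_verts)

lemma A_alpha_join_complete_psd:
  assumes "\<And>p q. adj H p q = adj H q p" "1/2 \<le> \<alpha>" "\<alpha> \<le> 1"
  shows "psd_mat (A_alpha \<alpha> (join (complete_graph m) H)) (m + verts H)"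
  using A_alpha_psd[of "join (complete_graph m) H" \<alpha>] join_complete_adj_commute[OF assms(1)] assms(2,3)
  by (simp add: join_complete_verts)

lemma edge_sum_join_complete:
  assumes n: "verts H = n"
  shows "edge_sum \<alpha> (adj (join (complete_graph m) H)) (m + n) f = edge_sum \<alpha> (\<lambda>i j. i \<noteq> j) m f
    + 2 * (\<Sum>u<m. \<Sum>h<n. edge_form \<alpha> (f u) (f (m + h))) + edge_sum \<alpha> (adj H) n (\<lambda>h. f (m + h))"
proof -
  let ?A = "adj (join (complete_graph m) H)"
  let ?F = "\<lambda>i j. if ?A i j then edge_form \<alpha> (f i) (f j) else 0"
  have "edge_sum \<alpha> ?A (m + n) f = (\<Sum>i<m. \<Sum>j<m + n. ?F i j) + (\<Sum>h<n. \<Sum>j<m + n. ?F (m + h) j)"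
    unfolding edge_sum_def by (rule sum_lessThan_add_split)
  also have "(\<Sum>i<m. \<Sum>j<m + n. ?F i j) = (\<Sum>i<m. (\<Sum>j<m. ?F i j) + (\<Sum>h<n. ?F i (m + h)))"
    by (simp only: sum_lessThan_add_split)
  also have "\<dots> = edge_sum \<alpha> (\<lambda>i j. i \<noteq> j) m f + (\<Sum>u<m. \<Sum>h<n. edge_form \<alpha> (f u) (f (m + h)))"
    unfolding edge_sum_def sum.distrib
    by (intro arg_cong2[where f="(+)"] sum.cong refl) (auto simp: join_complete_adj n)
  also have "(\<Sum>h<n. \<Sum>j<m + n. ?F (m + h) j)
      = (\<Sum>h<n. (\<Sum>j<m. ?F (m + h) j) + (\<Sum>h'<n. ?F (m + h) (m + h')))"
    by (simp only: sum_lessThan_add_split)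
  also have "\<dots> = (\<Sum>h<n. \<Sum>u<m. edge_form \<alpha> (f u) (f (m + h))) + edge_sum \<alpha> (adj H) n (\<lambda>h. f (m + h))"
    unfolding edge_sum_def sum.distrib
    by (intro arg_cong2[where f="(+)"] sum.cong refl) (auto simp: join_complete_adj n edge_form_commute)
  also have "(\<Sum>h<n. \<Sum>u<m. edge_form \<alpha> (f u) (f (m + h))) = (\<Sum>u<m. \<Sum>h<n. edge_form \<alpha> (f u) (f (m + h)))"
    by (rule sum.swap)
  finally show ?thesis by simp
qed

lemma join_complete_neighbour_sum:
  assumes n: "verts H = n" and p: "p < n"
  shows "(\<Sum>j<m + n. if adj (join (complete_graph m) H) (m + p) j then F j else 0)
    = (\<Sum>u<m. F u) + (\<Sum>q<n. if adj H p q then F (m + q) else 0)"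
  by (simp only: sum_lessThan_add_split, intro arg_cong2[where f="(+)"] sum.cong refl)
    (auto simp: join_complete_adj n p)

lemma A_alpha_join_complete_mult_index:
  assumes n: "verts H = n" and z: "z \<in> carrier_vec (m + n)" and p: "p < n"
  shows "(A_alpha \<alpha> (join (complete_graph m) H) *\<^sub>v z) $ (m + p)
    = \<alpha> * (real m + (\<Sum>q<n. if adj H p q then 1 else 0)) * z $ (m + p)
      + (1 - \<alpha>) * ((\<Sum>u<m. z $ u) + (\<Sum>q<n. if adj H p q then z $ (m + q) else 0))"
proof -
  let ?J = "join (complete_graph m) H"
  have vJ: "verts ?J = m + n" using n by (simp add: join_complete_verts)
  have "real (degree ?J (m + p)) = real m + (\<Sum>q<n. if adj H p q then 1 else 0)"
    unfolding degree_as_sum vJ using join_complete_neighbour_sum[OF n p, of m "\<lambda>_. 1::real"] by simp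
  moreover have "(\<Sum>j<verts ?J. if adj ?J (m + p) j then z $ j else 0) =
      (\<Sum>u<m. z $ u) + (\<Sum>q<n. if adj H p q then z $ (m + q) else 0)"
    unfolding vJ using join_complete_neighbour_sum[OF n p, of m "\<lambda>j. z $ j"] by simp
  ultimately show ?thesis using A_alpha_mult_index[of z ?J "m + p" \<alpha>] z p vJ by simp
qed

section \<open>Permuting the vertices of the second summand\<close>

definition inverse_perms_on :: "(nat \<Rightarrow> nat) \<Rightarrow> (nat \<Rightarrow> nat) \<Rightarrow> nat \<Rightarrow> bool" where
  "inverse_perms_on \<pi> \<psi> n \<longleftrightarrow> (\<forall>p<n. \<pi> p < n \<and> \<psi> p < n \<and> \<psi> (\<pi> p) = p \<and> \<pi> (\<psi> p) = p)"

definition permute_tail :: "nat \<Rightarrow> nat \<Rightarrow> (nat \<Rightarrow> nat) \<Rightarrow> real vec \<Rightarrow> real vec" where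
  "permute_tail m n \<pi> x = vec (m + n) (\<lambda>i. if i < m then x $ i else x $ (m + \<pi> (i - m)))"

lemma sum_inverse_perms_on:
  "inverse_perms_on \<pi> \<psi> n \<Longrightarrow> (\<Sum>q<n. F (\<pi> q)) = (\<Sum>q<n. F q)"
  by (rule sum.reindex_bij_witness[where i=\<psi> and j=\<pi>]) (auto simp: inverse_perms_on_def)

lemma edge_sum_permute:
  assumes P: "inverse_perms_on \<pi> \<psi> n"
  shows "edge_sum \<alpha> E n (\<lambda>q. g (\<pi> q)) = edge_sum \<alpha> (\<lambda>p q. E (\<psi> p) (\<psi> q)) n g"
proof -
  define F where "F p q = (if E (\<psi> p) (\<psi> q) then edge_form \<alpha> (g p) (g q) else 0)" for p q
  have "edge_sum \<alpha> E n (\<lambda>q. g (\<pi> q)) = (\<Sum>p<n. \<Sum>q<n. F (\<pi> p) (\<pi> q))"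
    unfolding edge_sum_def F_def using P by (intro sum.cong refl) (auto simp: inverse_perms_on_def)
  also have "\<dots> = (\<Sum>p<n. \<Sum>q<n. F p q)"
    by (simp only: sum_inverse_perms_on[OF P, where F="\<lambda>p. \<Sum>q<n. F p q"] sum_inverse_perms_on[OF P])
  finally show ?thesis unfolding edge_sum_def F_def .
qed

lemma edge_sum_diff:
  assumes D: "D \<subseteq> {..<n} \<times> {..<n}"
    and same: "\<And>p q. p < n \<Longrightarrow> q < n \<Longrightarrow> (p, q) \<notin> D \<Longrightarrow> E p q = E' p q"
  shows "edge_sum \<alpha> E n g - edge_sum \<alpha> E' n g = (\<Sum>(p, q)\<in>D.
    (if E p q then edge_form \<alpha> (g p) (g q) else 0) - (if E' p q then edge_form \<alpha> (g p) (g q) else 0))"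
proof -
  define h where "h = (\<lambda>(p, q). (if E p q then edge_form \<alpha> (g p) (g q) else 0)
    - (if E' p q then edge_form \<alpha> (g p) (g q) else 0))"
  have "edge_sum \<alpha> E n g - edge_sum \<alpha> E' n g = (\<Sum>p<n. \<Sum>q<n. h (p, q))"
    unfolding edge_sum_def h_def by (simp add: sum_subtractf)
  also have "\<dots> = (\<Sum>pq\<in>{..<n} \<times> {..<n}. h pq)" by (simp add: sum.cartesian_product)
  also have "\<dots> = (\<Sum>pq\<in>D. h pq)"
    using D same by (intro sum.mono_neutral_right) (auto simp: h_def)
  finally show ?thesis unfolding h_def .
qed

lemma permute_tail_carrier: "permute_tail m n \<pi> x \<in> carrier_vec (m + n)"
  unfolding permute_tail_def by simp

lemma permute_tail_dim [simp]: "dim_vec (permute_tail m n \<pi> x) = m + n"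
  unfolding permute_tail_def by simp

lemma permute_tail_index:
  "i < m + n \<Longrightarrow> permute_tail m n \<pi> x $ i = (if i < m then x $ i else x $ (m + \<pi> (i - m)))"
  unfolding permute_tail_def by simp

lemma permute_tail_index_head [simp]: "u < m \<Longrightarrow> permute_tail m n \<pi> x $ u = x $ u"
  unfolding permute_tail_def by simp

lemma permute_tail_index_tail [simp]: "q < n \<Longrightarrow> permute_tail m n \<pi> x $ (m + q) = x $ (m + \<pi> q)"
  unfolding permute_tail_def by simp

lemma scalar_prod_permute_tail:
  assumes P: "inverse_perms_on \<pi> \<psi> n" and x: "x \<in> carrier_vec (m + n)"
  shows "permute_tail m n \<pi> x \<bullet> permute_tail m n \<pi> x = x \<bullet> x"
proof -
  have "permute_tail m n \<pi> x \<bullet> permute_tail m n \<pi> x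
      = (\<Sum>i<m. x $ i * x $ i) + (\<Sum>q<n. x $ (m + \<pi> q) * x $ (m + \<pi> q))"
    by (simp add: scalar_prod_sum[OF permute_tail_carrier permute_tail_carrier] sum_lessThan_add_split)
  also have "(\<Sum>q<n. x $ (m + \<pi> q) * x $ (m + \<pi> q)) = (\<Sum>q<n. x $ (m + q) * x $ (m + q))"
    by (rule sum_inverse_perms_on[OF P, where F="\<lambda>q. x $ (m + q) * x $ (m + q)"])
  finally show ?thesis by (simp add: scalar_prod_sum[OF x x] sum_lessThan_add_split)
qed

lemma quad_form_permute_tail:
  assumes P: "inverse_perms_on \<pi> \<psi> n" and x: "x \<in> carrier_vec (m + n)"
    and H: "verts H = n" "\<And>p q. adj H p q = adj H q p"
    and H': "verts H' = n" "\<And>p q. adj H' p q = adj H' q p"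
  shows "quad_form (A_alpha \<alpha> (join (complete_graph m) H')) (permute_tail m n \<pi> x)
      - quad_form (A_alpha \<alpha> (join (complete_graph m) H)) x
    = (edge_sum \<alpha> (adj H') n (\<lambda>q. x $ (m + \<pi> q)) - edge_sum \<alpha> (adj H) n (\<lambda>q. x $ (m + q))) / 2"
proof -
  let ?J = "join (complete_graph m) H" and ?J' = "join (complete_graph m) H'"
  let ?y = "permute_tail m n \<pi> x"
  have q': "quad_form (A_alpha \<alpha> ?J') ?y = edge_sum \<alpha> (adj ?J') (m + n) (\<lambda>i. ?y $ i) / 2"
    using quad_form_A_alpha[OF join_complete_adj_commute[OF H'(2)], of ?y] permute_tail_carrier H'(1)
    by (simp add: join_complete_verts)
  have q: "quad_form (A_alpha \<alpha> ?J) x = edge_sum \<alpha> (adj ?J) (m + n) (\<lambda>i. x $ i) / 2"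
    using quad_form_A_alpha[OF join_complete_adj_commute[OF H(2)], of x] x H(1)
    by (simp add: join_complete_verts)
  have cross: "(\<Sum>u<m. \<Sum>h<n. edge_form \<alpha> (x $ u) (x $ (m + \<pi> h)))
      = (\<Sum>u<m. \<Sum>h<n. edge_form \<alpha> (x $ u) (x $ (m + h)))"
    by (intro sum.cong refl sum_inverse_perms_on[OF P, where F="\<lambda>h. edge_form \<alpha> (x $ _) (x $ (m + h))"])
  have "edge_sum \<alpha> (\<lambda>i j. i \<noteq> j) m (\<lambda>i. ?y $ i) = edge_sum \<alpha> (\<lambda>i j. i \<noteq> j) m (\<lambda>i. x $ i)"
    unfolding edge_sum_def by (intro sum.cong refl) simp
  moreover have "edge_sum \<alpha> (adj H') n (\<lambda>h. ?y $ (m + h)) = edge_sum \<alpha> (adj H') n (\<lambda>q. x $ (m + \<pi> q))"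
    unfolding edge_sum_def by (intro sum.cong refl) simp
  moreover have "(\<Sum>u<m. \<Sum>h<n. edge_form \<alpha> (?y $ u) (?y $ (m + h)))
      = (\<Sum>u<m. \<Sum>h<n. edge_form \<alpha> (x $ u) (x $ (m + \<pi> h)))"
    by (intro sum.cong refl) simp
  ultimately show ?thesis
    unfolding q q' edge_sum_join_complete[OF H(1)] edge_sum_join_complete[OF H'(1)] cross
    by (simp add: field_simps)
qed

section \<open>Paths and a cycle followed by a path\<close>

lemma path_graph_verts: "verts (path_graph n) = n"
  by (simp add: path_graph_def verts_def)

lemma path_graph_adj: "adj (path_graph n) p q \<longleftrightarrow> p < n \<and> q < n \<and> (q = p + 1 \<or> p = q + 1)"
  by (simp add: path_graph_def adj_def)

lemma path_graph_adj_commute: "adj (path_graph n) p q = adj (path_graph n) q p"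
  by (auto simp: path_graph_adj)

lemma path_neighbour_sum:
  assumes p: "p < n"
  shows "(\<Sum>q<n. if adj (path_graph n) p q then F q else 0)
    = (if 0 < p then F (p - 1) else 0) + (if p + 1 < n then F (p + 1) else 0)"
proof -
  have "(\<Sum>q<n. if adj (path_graph n) p q then F q else 0) =
      (\<Sum>q<n. (if q = p - 1 then (if 0 < p then F q else 0) else 0) + (if q = p + 1 then F q else 0))"
    using p by (intro sum.cong refl) (auto simp: path_graph_adj)
  also have "\<dots> = (if 0 < p then F (p - 1) else 0) + (if p + 1 < n then F (p + 1) else 0)"
    using p by (auto simp: sum.distrib)
  finally show ?thesis .
qed

abbreviation cycle_path_graph :: "nat \<Rightarrow> nat \<Rightarrow> sgraph" where
  "cycle_path_graph k n \<equiv> disj_union (cycle_graph k) (path_graph (n - k))"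

lemma cycle_path_graph_verts: "k \<le> n \<Longrightarrow> verts (cycle_path_graph k n) = n"
  by (simp add: disj_union_def verts_def cycle_graph_def path_graph_def)

lemma cycle_path_graph_adj:
  assumes "3 \<le> k" "k \<le> n"
  shows "adj (cycle_path_graph k n) c d \<longleftrightarrow>
    (c < k \<and> d < k \<and> (d = c + 1 \<or> c = d + 1 \<or> (c = k - 1 \<and> d = 0) \<or> (c = 0 \<and> d = k - 1))) \<or>
    (k \<le> c \<and> k \<le> d \<and> c < n \<and> d < n \<and> (d = c + 1 \<or> c = d + 1))"
proof -
  have succ: "Suc x mod k = (if Suc x = k then 0 else Suc x)" if "x < k" for x
    using that by (cases "Suc x = k") auto
  have cycle: "d = (c + 1) mod k \<or> c = (d + 1) mod k \<longleftrightarrow>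
      d = c + 1 \<or> c = d + 1 \<or> (c = k - 1 \<and> d = 0) \<or> (c = 0 \<and> d = k - 1)" if "c < k" "d < k"
    using that assms(1) by (simp add: succ) arith
  have "adj (cycle_path_graph k n) c d \<longleftrightarrow>
      (c < k \<and> d < k \<and> (d = (c + 1) mod k \<or> c = (d + 1) mod k)) \<or>
      (k \<le> c \<and> k \<le> d \<and> c < n \<and> d < n \<and> (d = c + 1 \<or> c = d + 1))"
    using assms(2) by (auto simp: disj_union_def verts_def adj_def cycle_graph_def path_graph_def)
  then show ?thesis using cycle by (cases "c < k \<and> d < k") auto
qed

lemma cycle_path_graph_adj_commute:
  "adj (cycle_path_graph k n) p q = adj (cycle_path_graph k n) q p"
  by (auto simp: disj_union_def verts_def adj_def cycle_graph_def path_graph_def)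

lemma cycle_path_neighbour_sum_0:
  assumes "3 \<le> k" "k \<le> n"
  shows "(\<Sum>q<n. if adj (cycle_path_graph k n) 0 q then F q else 0) = F 1 + F (k - 1)"
proof -
  have "(\<Sum>q<n. if adj (cycle_path_graph k n) 0 q then F q else 0)
      = (\<Sum>q<n. (if q = 1 then F q else 0) + (if q = k - 1 then F q else 0))"
    using assms by (intro sum.cong refl) (auto simp: cycle_path_graph_adj)
  also have "\<dots> = F 1 + F (k - 1)" using assms by (auto simp: sum.distrib)
  finally show ?thesis .
qed

lemma cycle_path_graph_isolated:
  "3 \<le> k \<Longrightarrow> n = k + 1 \<Longrightarrow> \<not> adj (cycle_path_graph k n) k q"
  using cycle_path_graph_adj[of k n k q] by simp

lemma A_alpha_join_path_mult_index:
  assumes z: "z \<in> carrier_vec (m + n)" and p: "p < n"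
  shows "(A_alpha \<alpha> (join (complete_graph m) (path_graph n)) *\<^sub>v z) $ (m + p)
    = \<alpha> * (real m + (if 0 < p then 1 else 0) + (if p + 1 < n then 1 else 0)) * z $ (m + p)
      + (1 - \<alpha>) * ((\<Sum>u<m. z $ u) + (if 0 < p then z $ (m + (p - 1)) else 0)
                    + (if p + 1 < n then z $ (m + (p + 1)) else 0))"
  using A_alpha_join_complete_mult_index[OF path_graph_verts z p, of \<alpha>]
  unfolding path_neighbour_sum[OF p] by (simp only: add.assoc)

section \<open>Relabellings of the path\<close>

lemma edge_sum_path_swap_01:
  assumes n: "3 \<le> n"
  shows "edge_sum \<alpha> (\<lambda>p q. adj (path_graph n) ((id(0 := 1, 1 := 0)) p) ((id(0 := 1, 1 := 0)) q)) n g
      - edge_sum \<alpha> (adj (path_graph n)) n g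
    = 2 * (edge_form \<alpha> (g 0) (g 2) - edge_form \<alpha> (g 1) (g 2))"
proof -
  let ?D = "{(1, 2), (2, 1), (0, 2), (2, 0)} :: (nat \<times> nat) set"
  have "edge_sum \<alpha> (\<lambda>p q. adj (path_graph n) ((id(0 := 1, 1 := 0)) p) ((id(0 := 1, 1 := 0)) q)) n g
      - edge_sum \<alpha> (adj (path_graph n)) n g
    = (\<Sum>(p, q)\<in>?D. (if adj (path_graph n) ((id(0 := 1, 1 := 0)) p) ((id(0 := 1, 1 := 0)) q)
          then edge_form \<alpha> (g p) (g q) else 0)
        - (if adj (path_graph n) p q then edge_form \<alpha> (g p) (g q) else 0))"
    using n by (intro edge_sum_diff) (auto simp: path_graph_adj)
  also have "\<dots> = 2 * (edge_form \<alpha> (g 0) (g 2) - edge_form \<alpha> (g 1) (g 2))"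
    using n by (simp add: path_graph_adj edge_form_commute)
  finally show ?thesis .
qed

lemma path_reverse_segment_adj_change:
  fixes a j n p q :: nat
  assumes aj: "a + 2 \<le> j" "j + 1 < n" and pq: "p < n" "q < n"
    and rv: "rv = (\<lambda>q. if a + 1 \<le> q \<and> q \<le> j then a + 1 + j - q else q)"
    and changed: "adj (path_graph n) (rv p) (rv q) \<noteq> adj (path_graph n) p q"
  shows "(p, q) \<in> {(a, a + 1), (a + 1, a), (j, j + 1), (j + 1, j),
                   (a, j), (j, a), (a + 1, j + 1), (j + 1, a + 1)}"
  using aj pq changed unfolding rv path_graph_adj
  by (cases "p \<le> a"; cases "p \<le> j"; cases "q \<le> a"; cases "q \<le> j") auto

lemma edge_sum_path_reverse_segment:
  fixes a j n :: nat
  assumes aj: "a + 2 \<le> j" "j + 1 < n"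
    and rv: "rv = (\<lambda>q. if a + 1 \<le> q \<and> q \<le> j then a + 1 + j - q else q)"
  shows "edge_sum \<alpha> (\<lambda>p q. adj (path_graph n) (rv p) (rv q)) n g - edge_sum \<alpha> (adj (path_graph n)) n g
    = 2 * (edge_form \<alpha> (g a) (g j) + edge_form \<alpha> (g (a + 1)) (g (j + 1))
           - edge_form \<alpha> (g a) (g (a + 1)) - edge_form \<alpha> (g j) (g (j + 1)))"
proof -
  let ?D = "{(a, a + 1), (a + 1, a), (j, j + 1), (j + 1, j), (a, j), (j, a), (a + 1, j + 1), (j + 1, a + 1)}"
  let ?h = "\<lambda>p q. (if adj (path_graph n) (rv p) (rv q) then edge_form \<alpha> (g p) (g q) else 0)
    - (if adj (path_graph n) p q then edge_form \<alpha> (g p) (g q) else 0)"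
  have "edge_sum \<alpha> (\<lambda>p q. adj (path_graph n) (rv p) (rv q)) n g - edge_sum \<alpha> (adj (path_graph n)) n g
      = (\<Sum>(p, q)\<in>?D. ?h p q)"
  proof (rule edge_sum_diff)
    show "?D \<subseteq> {..<n} \<times> {..<n}" using aj by auto
  qed (use path_reverse_segment_adj_change[OF aj _ _ rv] in blast)
  also have "\<dots> = ?h a (a + 1) + ?h (a + 1) a + ?h j (j + 1) + ?h (j + 1) j
      + ?h a j + ?h j a + ?h (a + 1) (j + 1) + ?h (j + 1) (a + 1)"
  proof -
    have "(\<Sum>(p, q)\<in>?D. h p q) = h a (a + 1) + h (a + 1) a + h j (j + 1) + h (j + 1) j
      + h a j + h j a + h (a + 1) (j + 1) + h (j + 1) (a + 1)" for h :: "nat \<Rightarrow> nat \<Rightarrow> real"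
      using aj by (simp add: add.assoc)
    then show ?thesis .
  qed
  also have "\<dots> = 2 * (edge_form \<alpha> (g a) (g j) + edge_form \<alpha> (g (a + 1)) (g (j + 1))
           - edge_form \<alpha> (g a) (g (a + 1)) - edge_form \<alpha> (g j) (g (j + 1)))"
  proof -
    have r: "rv a = a" "rv (a + 1) = j" "rv j = a + 1" "rv (j + 1) = j + 1" using aj by (auto simp: rv)
    have "?h a (a + 1) = - edge_form \<alpha> (g a) (g (a + 1))" "?h (a + 1) a = - edge_form \<alpha> (g a) (g (a + 1))"
      "?h j (j + 1) = - edge_form \<alpha> (g j) (g (j + 1))" "?h (j + 1) j = - edge_form \<alpha> (g j) (g (j + 1))"
      "?h a j = edge_form \<alpha> (g a) (g j)" "?h j a = edge_form \<alpha> (g a) (g j)"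
      "?h (a + 1) (j + 1) = edge_form \<alpha> (g (a + 1)) (g (j + 1))"
      "?h (j + 1) (a + 1) = edge_form \<alpha> (g (a + 1)) (g (j + 1))"
      using aj unfolding r by (auto simp: path_graph_adj edge_form_commute)
    then show ?thesis by simp
  qed
  finally show ?thesis .
qed

text \<open>The relabelling \<open>\<psi>\<close> maps the path vertices \<open>b + 1, \<dots>, b + k\<close> onto the cycle
  \<open>0, \<dots>, k - 1\<close> and the vertices \<open>0, \<dots>, b\<close> onto the start \<open>k, \<dots>, k + b\<close> of the path;
  this cuts the path edges at \<open>b\<close> and \<open>b + k\<close>, closes the cycle and reconnects \<open>b\<close>
  with \<open>b + k + 1\<close>.\<close>

lemma cycle_path_relabel_adj_change:
  fixes b k n p q :: nat
  assumes bk: "3 \<le> k" "b + k + 2 \<le> n" and pq: "p < n" "q < n"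
    and \<psi>: "\<psi> = (\<lambda>q. if q \<le> b then k + q else if q \<le> b + k then q - (b + 1) else q)"
    and changed: "adj (cycle_path_graph k n) (\<psi> p) (\<psi> q) \<noteq> adj (path_graph n) p q"
  shows "(p, q) \<in> {(b, b + 1), (b + 1, b), (b + k, b + k + 1), (b + k + 1, b + k),
                   (b + 1, b + k), (b + k, b + 1), (b, b + k + 1), (b + k + 1, b)}"
proof -
  have kn: "3 \<le> k" "k \<le> n" using bk by auto
  note A = cycle_path_graph_adj[OF kn]
  have r: "\<psi> q = (if q \<le> b then k + q else if q \<le> b + k then q - (b + 1) else q)" for q
    unfolding \<psi> by simp
  have ne: "adj (cycle_path_graph k n) (\<psi> p) (\<psi> q) \<longleftrightarrow> \<not> (q = p + 1 \<or> p = q + 1)"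
    using changed pq unfolding path_graph_adj by blast
  consider (L) "p \<le> b" | (M) "b + 1 \<le> p \<and> p \<le> b + k" | (R) "b + k < p" by linarith
  note p_cases = this
  consider (L) "q \<le> b" | (M) "b + 1 \<le> q \<and> q \<le> b + k" | (R) "b + k < q" by linarith
  note q_cases = this
  show ?thesis
  proof (cases rule: p_cases)
    case pL: L
    then have rp: "\<psi> p = k + p" using r by simp
    show ?thesis
    proof (cases rule: q_cases)
      case L
      then have "adj (cycle_path_graph k n) (\<psi> p) (\<psi> q) \<longleftrightarrow> q = p + 1 \<or> p = q + 1"
        using pL bk r rp unfolding A by auto
      then show ?thesis using ne by blast
    next
      case M
      then have "\<not> adj (cycle_path_graph k n) (\<psi> p) (\<psi> q)" using pL bk r rp unfolding A by auto
      then have "q = p + 1" using ne pL M by auto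
      then show ?thesis using pL M by auto
    next
      case R
      then have "adj (cycle_path_graph k n) (\<psi> p) q" using ne pL bk r by auto
      then have "q = k + p + 1" using pL R bk rp unfolding A by auto
      then show ?thesis using pL R by auto
    qed
  next
    case pM: M
    then have rp: "\<psi> p = p - (b + 1)" using r by simp
    show ?thesis
    proof (cases rule: q_cases)
      case L
      then have "\<not> adj (cycle_path_graph k n) (\<psi> p) (\<psi> q)" using pM bk r rp unfolding A by auto
      then have "p = q + 1" using ne pM L by auto
      then show ?thesis using pM L by auto
    next
      case M
      then have rq: "\<psi> q = q - (b + 1)" using r by simp
      have "(p - (b + 1) = q - (b + 1) + 1 \<or> q - (b + 1) = p - (b + 1) + 1) \<longleftrightarrow> q = p + 1 \<or> p = q + 1"
        using pM M by auto
      then have "(p - (b + 1) = k - 1 \<and> q - (b + 1) = 0) \<or> (p - (b + 1) = 0 \<and> q - (b + 1) = k - 1)"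
        using ne pM M bk unfolding rp rq A by auto
      then show ?thesis using pM M bk by auto
    next
      case R
      then have "\<not> adj (cycle_path_graph k n) (\<psi> p) (\<psi> q)" using pM bk r rp unfolding A by auto
      then have "q = p + 1" using ne pM R by auto
      then show ?thesis using pM R by auto
    qed
  next
    case pR: R
    then have rp: "\<psi> p = p" using r by simp
    show ?thesis
    proof (cases rule: q_cases)
      case L
      then have "adj (cycle_path_graph k n) p (\<psi> q)" using ne pR bk r rp by auto
      then have "p = k + q + 1" using pR L bk r unfolding A by auto
      then show ?thesis using pR L by auto
    next
      case M
      then have "\<not> adj (cycle_path_graph k n) (\<psi> p) (\<psi> q)" using pR bk r rp unfolding A by auto
      then have "p = q + 1" using ne pR M by auto
      then show ?thesis using pR M by auto
    next
      case R
      then have "adj (cycle_path_graph k n) (\<psi> p) (\<psi> q) \<longleftrightarrow> q = p + 1 \<or> p = q + 1"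
        using pR bk pq r rp unfolding A by auto
      then show ?thesis using ne by blast
    qed
  qed
qed

lemma edge_sum_cycle_path_relabel:
  fixes b k n :: nat
  assumes bk: "3 \<le> k" "b + k + 2 \<le> n"
    and \<psi>: "\<psi> = (\<lambda>q. if q \<le> b then k + q else if q \<le> b + k then q - (b + 1) else q)"
  shows "edge_sum \<alpha> (\<lambda>p q. adj (cycle_path_graph k n) (\<psi> p) (\<psi> q)) n g
      - edge_sum \<alpha> (adj (path_graph n)) n g
    = 2 * (edge_form \<alpha> (g (b + 1)) (g (b + k)) + edge_form \<alpha> (g b) (g (b + k + 1))
           - edge_form \<alpha> (g b) (g (b + 1)) - edge_form \<alpha> (g (b + k)) (g (b + k + 1)))"
proof -
  have kn: "3 \<le> k" "k \<le> n" using bk by auto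
  let ?D = "{(b, b + 1), (b + 1, b), (b + k, b + k + 1), (b + k + 1, b + k),
             (b + 1, b + k), (b + k, b + 1), (b, b + k + 1), (b + k + 1, b)}"
  let ?h = "\<lambda>p q. (if adj (cycle_path_graph k n) (\<psi> p) (\<psi> q) then edge_form \<alpha> (g p) (g q) else 0)
    - (if adj (path_graph n) p q then edge_form \<alpha> (g p) (g q) else 0)"
  have "edge_sum \<alpha> (\<lambda>p q. adj (cycle_path_graph k n) (\<psi> p) (\<psi> q)) n g
      - edge_sum \<alpha> (adj (path_graph n)) n g = (\<Sum>(p, q)\<in>?D. ?h p q)"
  proof (rule edge_sum_diff)
    show "?D \<subseteq> {..<n} \<times> {..<n}" using bk by auto
  qed (use cycle_path_relabel_adj_change[OF bk _ _ \<psi>] in blast)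
  also have "\<dots> = ?h b (b + 1) + ?h (b + 1) b + ?h (b + k) (b + k + 1) + ?h (b + k + 1) (b + k)
      + ?h (b + 1) (b + k) + ?h (b + k) (b + 1) + ?h b (b + k + 1) + ?h (b + k + 1) b"
  proof -
    have "(\<Sum>(p, q)\<in>?D. h p q) = h b (b + 1) + h (b + 1) b + h (b + k) (b + k + 1) + h (b + k + 1) (b + k)
      + h (b + 1) (b + k) + h (b + k) (b + 1) + h b (b + k + 1) + h (b + k + 1) b"
      for h :: "nat \<Rightarrow> nat \<Rightarrow> real"
      using bk by (simp add: add.assoc)
    then show ?thesis .
  qed
  also have "\<dots> = 2 * (edge_form \<alpha> (g (b + 1)) (g (b + k)) + edge_form \<alpha> (g b) (g (b + k + 1))
           - edge_form \<alpha> (g b) (g (b + 1)) - edge_form \<alpha> (g (b + k)) (g (b + k + 1)))"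
  proof -
    have r: "\<psi> b = k + b" "\<psi> (b + 1) = 0" "\<psi> (b + k) = k - 1" "\<psi> (b + k + 1) = b + k + 1"
      using bk by (auto simp: \<psi>)
    have "?h b (b + 1) = - edge_form \<alpha> (g b) (g (b + 1))" "?h (b + 1) b = - edge_form \<alpha> (g b) (g (b + 1))"
      "?h (b + k) (b + k + 1) = - edge_form \<alpha> (g (b + k)) (g (b + k + 1))"
      "?h (b + k + 1) (b + k) = - edge_form \<alpha> (g (b + k)) (g (b + k + 1))"
      "?h (b + 1) (b + k) = edge_form \<alpha> (g (b + 1)) (g (b + k))"
      "?h (b + k) (b + 1) = edge_form \<alpha> (g (b + 1)) (g (b + k))"
      "?h b (b + k + 1) = edge_form \<alpha> (g b) (g (b + k + 1))"
      "?h (b + k + 1) b = edge_form \<alpha> (g b) (g (b + k + 1))"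
      using bk unfolding r by (auto simp: cycle_path_graph_adj[OF kn] path_graph_adj edge_form_commute)
    then show ?thesis by simp
  qed
  finally show ?thesis .
qed

lemma edge_sum_cycle_path_last:
  assumes k: "3 \<le> k" and n: "n = k + 1"
  shows "edge_sum \<alpha> (adj (cycle_path_graph k n)) n g - edge_sum \<alpha> (adj (path_graph n)) n g
    = 2 * (edge_form \<alpha> (g (k - 1)) (g 0) - edge_form \<alpha> (g (k - 1)) (g k))"
proof -
  have kn: "3 \<le> k" "k \<le> n" and bounds: "k < n" "n \<le> k + 1" using k n by auto
  let ?D = "{(k - 1, 0), (0, k - 1), (k - 1, k), (k, k - 1)}"
  let ?h = "\<lambda>p q. (if adj (cycle_path_graph k n) p q then edge_form \<alpha> (g p) (g q) else 0)
    - (if adj (path_graph n) p q then edge_form \<alpha> (g p) (g q) else 0)"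
  have "edge_sum \<alpha> (adj (cycle_path_graph k n)) n g - edge_sum \<alpha> (adj (path_graph n)) n g
      = (\<Sum>(p, q)\<in>?D. ?h p q)"
    using k bounds by (intro edge_sum_diff) (auto simp: cycle_path_graph_adj[OF kn] path_graph_adj)
  also have "\<dots> = ?h (k - 1) 0 + ?h 0 (k - 1) + ?h (k - 1) k + ?h k (k - 1)"
  proof -
    have "(\<Sum>(p, q)\<in>?D. h p q) = h (k - 1) 0 + h 0 (k - 1) + h (k - 1) k + h k (k - 1)"
      for h :: "nat \<Rightarrow> nat \<Rightarrow> real"
      using k by (simp add: add.assoc)
    then show ?thesis .
  qed
  also have "\<dots> = 2 * (edge_form \<alpha> (g (k - 1)) (g 0) - edge_form \<alpha> (g (k - 1)) (g k))"
    using k bounds by (auto simp: cycle_path_graph_adj[OF kn] path_graph_adj edge_form_commute)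
  finally show ?thesis .
qed

section \<open>The Perron vector of \<open>K\<^sub>m \<vee> P\<^sub>n\<close>\<close>

locale path_join_perron =
  fixes \<alpha> :: real and m n :: nat and x :: "real vec"
  assumes alpha: "1/2 < \<alpha>" "\<alpha> < 1" and m_pos: "1 \<le> m" and n_ge: "3 \<le> n"
    and x_carrier: "x \<in> carrier_vec (m + n)"
    and x_pos: "\<And>i. i < m + n \<Longrightarrow> x $ i > 0"
    and x_eigen: "A_alpha \<alpha> (join (complete_graph m) (path_graph n)) *\<^sub>v x
      = lambda1 (A_alpha \<alpha> (join (complete_graph m) (path_graph n))) \<cdot>\<^sub>v x"
    and x_sym: "\<And>q. q < n \<Longrightarrow> x $ (m + q) = x $ (m + (n - 1 - q))"
begin

abbreviation "A \<equiv> A_alpha \<alpha> (join (complete_graph m) (path_graph n))"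
abbreviation "\<rho> \<equiv> lambda1 A"

definition g :: "nat \<Rightarrow> real" where "g q = x $ (m + q)"
definition S :: real where "S = (\<Sum>u<m. x $ u)"

lemma g_pos: "q < n \<Longrightarrow> g q > 0"
  unfolding g_def using x_pos by simp

lemma g_sym: "q < n \<Longrightarrow> g q = g (n - 1 - q)"
  unfolding g_def using x_sym by simp

lemma path_vertex_eq:
  assumes p: "p < n"
  shows "\<rho> * g p = \<alpha> * (real m + (if 0 < p then 1 else 0) + (if p + 1 < n then 1 else 0)) * g p
     + (1 - \<alpha>) * (S + (if 0 < p then g (p - 1) else 0) + (if p + 1 < n then g (p + 1) else 0))"
proof -
  have "\<rho> * x $ (m + p) = (A *\<^sub>v x) $ (m + p)" using x_eigen x_carrier p by simp
  also have "\<dots> = \<alpha> * (real m + (if 0 < p then 1 else 0) + (if p + 1 < n then 1 else 0)) * x $ (m + p)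
      + (1 - \<alpha>) * ((\<Sum>u<m. x $ u) + (if 0 < p then x $ (m + (p - 1)) else 0)
                    + (if p + 1 < n then x $ (m + (p + 1)) else 0))"
    by (rule A_alpha_join_path_mult_index[OF x_carrier p])
  finally show ?thesis by (simp only: g_def S_def)
qed

lemma quad_form_permute_tail_ge:
  assumes H: "verts H = n" "\<And>p q. adj H p q = adj H q p" and P: "inverse_perms_on \<pi> \<psi> n"
    and ge: "edge_sum \<alpha> (\<lambda>p q. adj H (\<psi> p) (\<psi> q)) n g \<ge> edge_sum \<alpha> (adj (path_graph n)) n g"
  shows "quad_form (A_alpha \<alpha> (join (complete_graph m) H)) (permute_tail m n \<pi> x)
    \<ge> \<rho> * (permute_tail m n \<pi> x \<bullet> permute_tail m n \<pi> x)"
proof -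
  have "edge_sum \<alpha> (adj H) n (\<lambda>q. x $ (m + \<pi> q)) = edge_sum \<alpha> (\<lambda>p q. adj H (\<psi> p) (\<psi> q)) n g"
    using edge_sum_permute[OF P, of \<alpha> "adj H" g] by (simp add: g_def)
  then have "quad_form (A_alpha \<alpha> (join (complete_graph m) H)) (permute_tail m n \<pi> x) - quad_form A x
      = (edge_sum \<alpha> (\<lambda>p q. adj H (\<psi> p) (\<psi> q)) n g - edge_sum \<alpha> (adj (path_graph n)) n g) / 2"
    using quad_form_permute_tail[OF P x_carrier path_graph_verts path_graph_adj_commute H]
    by (simp add: g_def[abs_def])
  moreover have "quad_form A x = \<rho> * (x \<bullet> x)" using x_eigen x_carrier by (simp add: quad_form_def)
  ultimately show ?thesis using ge scalar_prod_permute_tail[OF P x_carrier] by simp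
qed

lemma path_relabel_eigenvector:
  assumes P: "inverse_perms_on \<tau> \<tau> n"
    and ge: "edge_sum \<alpha> (\<lambda>p q. adj (path_graph n) (\<tau> p) (\<tau> q)) n g \<ge> edge_sum \<alpha> (adj (path_graph n)) n g"
  shows "A *\<^sub>v permute_tail m n \<tau> x = \<rho> \<cdot>\<^sub>v permute_tail m n \<tau> x"
  using eigenvector_of_quad_form_ge_lambda1[of A "m + n" "permute_tail m n \<tau> x"]
    A_alpha_join_complete_sym_mat[OF path_graph_adj_commute, of \<alpha> m]
    A_alpha_join_complete_psd[OF path_graph_adj_commute, of \<alpha> m] alpha m_pos
    quad_form_permute_tail_ge[OF path_graph_verts path_graph_adj_commute P ge]
  by (simp add: path_graph_verts permute_tail_carrier)

text \<open>Monotonicity towards the middle: if it failed at the first place, a relabelling of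
  the path would give an eigenvector of \<open>\<rho>\<close> whose eigen-equations contradict those of \<open>x\<close>.\<close>

lemma g_0_less_1: "g 0 < g 1"
proof (rule ccontr)
  assume "\<not> g 0 < g 1"
  then have le: "g 1 \<le> g 0" by simp
  let ?\<tau> = "id(0 := 1, 1 := 0) :: nat \<Rightarrow> nat"
  let ?y = "permute_tail m n ?\<tau> x"
  have P: "inverse_perms_on ?\<tau> ?\<tau> n" using n_ge by (auto simp: inverse_perms_on_def)
  have "edge_form \<alpha> (g 0) (g 2) - edge_form \<alpha> (g 1) (g 2)
      = (g 0 - g 1) * (\<alpha> * (g 0 + g 1) + 2 * (1 - \<alpha>) * g 2)"
    by (simp add: edge_form_def algebra_simps power2_eq_square)
  also have "\<dots> \<ge> 0" using le alpha g_pos[of 0] g_pos[of 1] g_pos[of 2] n_ge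
    by (intro mult_nonneg_nonneg add_nonneg_nonneg) auto
  finally have "A *\<^sub>v ?y = \<rho> \<cdot>\<^sub>v ?y"
    using edge_sum_path_swap_01[OF n_ge, of \<alpha> g] by (intro path_relabel_eigenvector[OF P]) simp
  moreover have n: "0 < n" "1 < n" using n_ge by auto
  ultimately have "\<rho> * g 1 = (A *\<^sub>v ?y) $ (m + 0)" by (simp add: g_def permute_tail_index)
  also have "\<dots> = \<alpha> * (real m + 1) * g 1 + (1 - \<alpha>) * (S + g 0)"
    using A_alpha_join_path_mult_index[OF permute_tail_carrier, of 0 n \<alpha> m ?\<tau> x] n
    by (simp add: g_def S_def permute_tail_index)
  finally have "\<rho> * g 1 = \<alpha> * (real m + 1) * g 1 + (1 - \<alpha>) * (S + g 0)" .
  moreover have "\<rho> * g 1 = \<alpha> * (real m + 2) * g 1 + (1 - \<alpha>) * (S + g 0 + g 2)"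
    using path_vertex_eq[of 1] n_ge by (simp add: eval_nat_numeral add.commute)
  ultimately have "\<alpha> * g 1 + (1 - \<alpha>) * g 2 = 0" by (simp add: algebra_simps)
  moreover have "\<alpha> * g 1 + (1 - \<alpha>) * g 2 > 0"
    using alpha g_pos[of 1] g_pos[of 2] n_ge by (intro add_pos_pos mult_pos_pos) auto
  ultimately show False by simp
qed

text \<open>The induction step reverses the segment \<open>a + 1, \<dots>, j\<close>, where \<open>j\<close> is the mirror image
  of \<open>a + 2\<close>.\<close>

lemma g_less_step:
  assumes a: "2 * (a + 1) + 3 \<le> n" and prev: "g a < g (a + 1)"
  shows "g (a + 1) < g (a + 2)"
proof (rule ccontr)
  assume "\<not> g (a + 1) < g (a + 2)"
  then have le: "g (a + 2) \<le> g (a + 1)" by simp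
  define j where "j = n - 3 - a"
  have j: "a + 2 \<le> j" "j + 1 < n" "n - 1 - j = a + 2" "n - 1 - (j + 1) = a + 1"
    using a by (auto simp: j_def)
  define rv where "rv = (\<lambda>q. if a + 1 \<le> q \<and> q \<le> j then a + 1 + j - q else q)"
  let ?y = "permute_tail m n rv x"
  have P: "inverse_perms_on rv rv n" using j by (auto simp: inverse_perms_on_def rv_def)
  have gj: "g j = g (a + 2)" "g (j + 1) = g (a + 1)" using g_sym[of j] g_sym[of "j + 1"] j by auto
  have "edge_form \<alpha> (g a) (g j) + edge_form \<alpha> (g (a + 1)) (g (j + 1))
      - edge_form \<alpha> (g a) (g (a + 1)) - edge_form \<alpha> (g j) (g (j + 1))
      = 2 * (1 - \<alpha>) * ((g (a + 1) - g a) * (g (a + 1) - g (a + 2)))"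
    unfolding gj edge_form_def by (simp add: algebra_simps power2_eq_square)
  also have "\<dots> \<ge> 0" using le prev alpha by (intro mult_nonneg_nonneg) auto
  finally have "A *\<^sub>v ?y = \<rho> \<cdot>\<^sub>v ?y"
    using edge_sum_path_reverse_segment[OF j(1,2) rv_def, of \<alpha> g]
    by (intro path_relabel_eigenvector[OF P]) simp
  moreover have n: "a + 1 < n" "a + 2 < n" using j by auto
  ultimately have "\<rho> * g j = (A *\<^sub>v ?y) $ (m + (a + 1))"
    using j by (simp add: g_def rv_def permute_tail_index)
  also have "\<dots> = \<alpha> * (real m + 2) * g j + (1 - \<alpha>) * (S + g a + g (j - 1))"
    using A_alpha_join_path_mult_index[OF permute_tail_carrier, of "a + 1" n \<alpha> m rv x] j n
    by (simp add: g_def S_def rv_def permute_tail_index)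
  finally have "\<rho> * g j = \<alpha> * (real m + 2) * g j + (1 - \<alpha>) * (S + g a + g (j - 1))" .
  moreover have "\<rho> * g j = \<alpha> * (real m + 2) * g j + (1 - \<alpha>) * (S + g (j - 1) + g (j + 1))"
    using path_vertex_eq[of j] j by simp
  ultimately have "g a = g (j + 1)" using alpha by simp
  then show False using prev gj by simp
qed

lemma g_increasing_to_middle: "2 * i + 3 \<le> n \<Longrightarrow> g i < g (i + 1)"
proof (induction i)
  case 0
  then show ?case using g_0_less_1 by simp
next
  case (Suc i)
  then show ?case using g_less_step[of i] by simp
qed

abbreviation "A' k \<equiv> A_alpha \<alpha> (join (complete_graph m) (cycle_path_graph k n))"

text \<open>For \<open>n = k + 1\<close> the vector \<open>x\<close> itself is a test vector: closing the cycle at \<open>0\<close>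
  instead of at \<open>k\<close> does not change the quadratic form since \<open>g 0 = g k\<close>, but the isolated
  vertex \<open>k\<close> violates the eigen-equation.\<close>

lemma test_vector_last:
  assumes k: "3 \<le> k" and n: "n = k + 1"
  shows "\<exists>y \<in> carrier_vec (m + n). quad_form (A' k) y \<ge> \<rho> * (y \<bullet> y) \<and> A' k *\<^sub>v y \<noteq> \<rho> \<cdot>\<^sub>v y"
proof -
  have kn: "3 \<le> k" "k \<le> n" using k n by auto
  have P: "inverse_perms_on id id n" by (simp add: inverse_perms_on_def)
  have y: "permute_tail m n id x = x" using x_carrier by (intro eq_vecI) (auto simp: permute_tail_def)
  have "g 0 = g k" using g_sym[of 0] n by simp
  then have "edge_sum \<alpha> (adj (cycle_path_graph k n)) n g = edge_sum \<alpha> (adj (path_graph n)) n g"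
    using edge_sum_cycle_path_last[OF k n, of \<alpha> g] by (simp add: edge_form_commute)
  then have ge: "quad_form (A' k) x \<ge> \<rho> * (x \<bullet> x)"
    using quad_form_permute_tail_ge[OF cycle_path_graph_verts[OF kn(2)] cycle_path_graph_adj_commute P]
    by (simp add: y)
  have "A' k *\<^sub>v x \<noteq> \<rho> \<cdot>\<^sub>v x"
  proof
    assume "A' k *\<^sub>v x = \<rho> \<cdot>\<^sub>v x"
    then have "\<rho> * g k = (A' k *\<^sub>v x) $ (m + k)" using n x_carrier by (simp add: g_def)
    also have "\<dots> = \<alpha> * real m * g k + (1 - \<alpha>) * S"
      using A_alpha_join_complete_mult_index[OF cycle_path_graph_verts[OF kn(2)] x_carrier, of k \<alpha>]
        cycle_path_graph_isolated[OF k n] n by (simp add: g_def S_def)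
    finally have "\<rho> * g k = \<alpha> * real m * g k + (1 - \<alpha>) * S" .
    moreover have "\<rho> * g k = \<alpha> * (real m + 1) * g k + (1 - \<alpha>) * (S + g (k - 1))"
      using path_vertex_eq[of k] n k by simp
    ultimately have "\<alpha> * g k + (1 - \<alpha>) * g (k - 1) = 0" by (simp add: algebra_simps)
    moreover have "\<alpha> * g k + (1 - \<alpha>) * g (k - 1) > 0"
      using alpha g_pos[of k] g_pos[of "k - 1"] n by (intro add_pos_pos mult_pos_pos) auto
    ultimately show False by simp
  qed
  then show ?thesis using ge x_carrier by blast
qed

lemma g_centred_cycle_ends:
  assumes k: "3 \<le> k" and n: "n = 2 * b + 2 + k \<or> n = 2 * b + 3 + k"
  shows "g b < g (b + k)" "g (b + k + 1) \<le> g (b + 1)"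
proof -
  have inc: "g b < g (b + 1)" using g_increasing_to_middle[of b] n k by auto
  have "g b < g (b + k) \<and> g (b + k + 1) \<le> g (b + 1)"
  proof (cases "n = 2 * b + 2 + k")
    case True
    then have "g (b + k + 1) = g b" "g (b + k) = g (b + 1)"
      using g_sym[of "b + k + 1"] g_sym[of "b + k"] by auto
    then show ?thesis using inc by simp
  next
    case False
    then have n: "n = 2 * b + 3 + k" using n by simp
    then have "g (b + k + 1) = g (b + 1)" "g (b + k) = g (b + 2)"
      using g_sym[of "b + k + 1"] g_sym[of "b + k"] by auto
    moreover have "g (b + 1) < g (b + 2)" using g_increasing_to_middle[of "b + 1"] n k by auto
    ultimately show ?thesis using inc by simp
  qed
  then show "g b < g (b + k)" "g (b + k + 1) \<le> g (b + 1)" by auto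
qed

text \<open>For \<open>k + 2 \<le> n\<close> the cycle is cut out of the middle of the path, right after the
  vertex \<open>b\<close>; by the symmetry and monotonicity of \<open>g\<close> both factors of the resulting
  change of the quadratic form are nonnegative.\<close>

lemma test_vector_mid:
  assumes k: "3 \<le> k" and kn: "k + 2 \<le> n"
  shows "\<exists>y \<in> carrier_vec (m + n). quad_form (A' k) y \<ge> \<rho> * (y \<bullet> y) \<and> A' k *\<^sub>v y \<noteq> \<rho> \<cdot>\<^sub>v y"
proof -
  have kk: "3 \<le> k" "k \<le> n" using k kn by auto
  define b where "b = (n - k) div 2 - 1"
  have bk: "b + k + 2 \<le> n" and centred: "n = 2 * b + 2 + k \<or> n = 2 * b + 3 + k"
    using kn unfolding b_def by presburger+
  note ends = g_centred_cycle_ends[OF k centred]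
  define \<psi> where "\<psi> = (\<lambda>q. if q \<le> b then k + q else if q \<le> b + k then q - (b + 1) else q)"
  define \<pi> where "\<pi> = (\<lambda>c. if c < k then c + b + 1 else if c < k + b + 1 then c - k else c)"
  let ?y = "permute_tail m n \<pi> x"
  have P: "inverse_perms_on \<pi> \<psi> n" using bk by (auto simp: inverse_perms_on_def \<pi>_def \<psi>_def)
  have "edge_form \<alpha> (g (b + 1)) (g (b + k)) + edge_form \<alpha> (g b) (g (b + k + 1))
      - edge_form \<alpha> (g b) (g (b + 1)) - edge_form \<alpha> (g (b + k)) (g (b + k + 1))
      = 2 * (1 - \<alpha>) * ((g (b + 1) - g (b + k + 1)) * (g (b + k) - g b))"
    unfolding edge_form_def by (simp add: algebra_simps power2_eq_square)
  also have "\<dots> \<ge> 0" using ends alpha by (intro mult_nonneg_nonneg) auto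
  finally have ge: "quad_form (A' k) ?y \<ge> \<rho> * (?y \<bullet> ?y)"
    using edge_sum_cycle_path_relabel[OF k bk \<psi>_def, of \<alpha> g]
    by (intro quad_form_permute_tail_ge[OF cycle_path_graph_verts[OF kk(2)] cycle_path_graph_adj_commute P])
      simp
  have "A' k *\<^sub>v ?y \<noteq> \<rho> \<cdot>\<^sub>v ?y"
  proof
    assume eig: "A' k *\<^sub>v ?y = \<rho> \<cdot>\<^sub>v ?y"
    have n: "0 < n" "1 < n" "k - 1 < n" using k kn by auto
    have y: "?y $ (m + q) = g (\<pi> q)" if "q < n" for q using that by (simp add: g_def)
    have \<pi>: "\<pi> 0 = b + 1" "\<pi> 1 = b + 2" "\<pi> (k - 1) = b + k" using k by (simp_all add: \<pi>_def)
    have "\<rho> * g (b + 1) = (A' k *\<^sub>v ?y) $ (m + 0)" using eig y[of 0] \<pi> n by simp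
    also have "\<dots> = \<alpha> * (real m + (1 + 1)) * ?y $ (m + 0)
        + (1 - \<alpha>) * ((\<Sum>u<m. ?y $ u) + (?y $ (m + 1) + ?y $ (m + (k - 1))))"
      using A_alpha_join_complete_mult_index[OF cycle_path_graph_verts[OF kk(2)] permute_tail_carrier,
          of 0 \<alpha> m \<pi> x] n
      unfolding cycle_path_neighbour_sum_0[OF kk] by simp
    also have "\<dots> = \<alpha> * (real m + 2) * g (b + 1) + (1 - \<alpha>) * (S + g (b + 2) + g (b + k))"
      using y[of 0] y[of 1] y[of "k - 1"] \<pi> n by (simp add: S_def)
    finally have "\<rho> * g (b + 1) = \<alpha> * (real m + 2) * g (b + 1) + (1 - \<alpha>) * (S + g (b + 2) + g (b + k))" .
    moreover have "\<rho> * g (b + 1) = \<alpha> * (real m + 2) * g (b + 1) + (1 - \<alpha>) * (S + g b + g (b + 2))"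
      using path_vertex_eq[of "b + 1"] bk k by (simp add: algebra_simps eval_nat_numeral)
    ultimately have "g (b + k) = g b" using alpha by simp
    then show False using ends by simp
  qed
  then show ?thesis using ge permute_tail_carrier by blast
qed

lemma test_vector:
  assumes "3 \<le> k" "k + 1 \<le> n"
  obtains y where "y \<in> carrier_vec (m + n)" "quad_form (A' k) y \<ge> \<rho> * (y \<bullet> y)" "A' k *\<^sub>v y \<noteq> \<rho> \<cdot>\<^sub>v y"
proof (cases "n = k + 1")
  case True
  then show ?thesis using test_vector_last[OF assms(1)] that by blast
next
  case False
  then have "k + 2 \<le> n" using assms(2) by simp
  then show ?thesis using test_vector_mid[OF assms(1)] that by blast
qed

end

section \<open>Existence of the Perron vector\<close>

lemma lambda1_eigenvector_abs:
  assumes sym: "\<And>i j. adj G i j = adj G j i" and \<alpha>: "1/2 \<le> \<alpha>" "\<alpha> \<le> 1" and N: "verts G > 0"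
    and v: "v \<in> carrier_vec (verts G)"
    and eig: "A_alpha \<alpha> G *\<^sub>v v = lambda1 (A_alpha \<alpha> G) \<cdot>\<^sub>v v"
  shows "A_alpha \<alpha> G *\<^sub>v map_vec abs v = lambda1 (A_alpha \<alpha> G) \<cdot>\<^sub>v map_vec abs v"
proof (rule eigenvector_of_quad_form_ge_lambda1[OF A_alpha_sym_mat[OF sym] N A_alpha_psd[OF sym \<alpha>]])
  show "map_vec abs v \<in> carrier_vec (verts G)" using v by simp
  have "map_vec abs v \<bullet> map_vec abs v = v \<bullet> v"
    using v by (simp add: scalar_prod_sum[of _ "verts G"] abs_mult_self)
  moreover have "quad_form (A_alpha \<alpha> G) v = lambda1 (A_alpha \<alpha> G) * (v \<bullet> v)"
    using eig v by (simp add: quad_form_def)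
  ultimately show "lambda1 (A_alpha \<alpha> G) * (map_vec abs v \<bullet> map_vec abs v)
      \<le> quad_form (A_alpha \<alpha> G) (map_vec abs v)"
    using quad_form_A_alpha_le_abs[OF sym v \<alpha>(2)] by simp
qed

text \<open>At a vanishing entry the eigen-equation forces all neighbours to vanish, and every
  vertex of the join is within distance two of any other through the clique.\<close>

lemma join_complete_nonneg_eigenvector_pos:
  assumes \<alpha>: "\<alpha> < 1" and m: "1 \<le> m"
    and x: "x \<in> carrier_vec (m + verts H)" and nonneg: "\<And>i. i < m + verts H \<Longrightarrow> x $ i \<ge> 0"
    and nz: "x \<noteq> 0\<^sub>v (m + verts H)"
    and eig: "A_alpha \<alpha> (join (complete_graph m) H) *\<^sub>v x = \<mu> \<cdot>\<^sub>v x"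
    and i: "i < m + verts H"
  shows "x $ i > 0"
proof -
  let ?J = "join (complete_graph m) H" and ?N = "m + verts H"
  have vJ: "verts ?J = ?N" by (simp add: join_complete_verts)
  have zero_nbr: "x $ j = 0" if "p < ?N" "x $ p = 0" "j < ?N" "adj ?J p j" for p j
  proof -
    have "(A_alpha \<alpha> ?J *\<^sub>v x) $ p = \<mu> * x $ p" using eig x that by simp
    then have "(1 - \<alpha>) * (\<Sum>j<?N. if adj ?J p j then x $ j else 0) = 0"
      using A_alpha_mult_index[of x ?J p \<alpha>] x vJ that by simp
    then have "(\<Sum>j<?N. if adj ?J p j then x $ j else 0) = 0" using \<alpha> by simp
    then have "\<forall>j \<in> {..<?N}. (if adj ?J p j then x $ j else 0) = 0"
      using nonneg by (subst (asm) sum_nonneg_eq_0_iff) auto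
    from this[rule_format, of j] show ?thesis using that(3,4) by simp
  qed
  have clique: "x $ u > 0" if u: "u < m" for u
  proof (rule ccontr)
    assume "\<not> x $ u > 0"
    then have "x $ u = 0" using nonneg[of u] u by simp
    have "x $ j = 0" if "j < ?N" for j
    proof (cases "j = u")
      case False
      then have "adj ?J u j" using that u by (auto simp: join_complete_adj)
      then show ?thesis using zero_nbr[of u j] that u \<open>x $ u = 0\<close> by simp
    qed (use \<open>x $ u = 0\<close> in simp)
    then have "x = 0\<^sub>v ?N" using x by (intro eq_vecI) auto
    then show False using nz by simp
  qed
  show ?thesis
  proof (cases "i < m")
    case False
    show ?thesis
    proof (rule ccontr)
      assume "\<not> x $ i > 0"
      then have "x $ 0 = 0"
        using zero_nbr[of i 0] nonneg[of i] i False m by (auto simp: join_complete_adj)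
      then show False using clique[of 0] m by simp
    qed
  qed (use clique in simp)
qed

lemma edge_sum_path_reverse:
  "edge_sum \<alpha> (\<lambda>p q. adj (path_graph n) (n - 1 - p) (n - 1 - q)) n g = edge_sum \<alpha> (adj (path_graph n)) n g"
proof -
  have "adj (path_graph n) (n - 1 - p) (n - 1 - q) = adj (path_graph n) p q" if "p < n" "q < n" for p q
    using that unfolding path_graph_adj by arith
  then show ?thesis unfolding edge_sum_def by (intro sum.cong refl) simp
qed

lemma path_join_mirror_eigenvector:
  fixes \<alpha> :: real and m n :: nat and w :: "real vec"
  defines "A \<equiv> A_alpha \<alpha> (join (complete_graph m) (path_graph n))"
  assumes \<alpha>: "1/2 \<le> \<alpha>" "\<alpha> \<le> 1" and N: "0 < m + n" and w: "w \<in> carrier_vec (m + n)"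
    and eig: "A *\<^sub>v w = lambda1 A \<cdot>\<^sub>v w"
  shows "A *\<^sub>v permute_tail m n (\<lambda>q. n - 1 - q) w = lambda1 A \<cdot>\<^sub>v permute_tail m n (\<lambda>q. n - 1 - q) w"
proof -
  let ?y = "permute_tail m n (\<lambda>q. n - 1 - q) w"
  have P: "inverse_perms_on (\<lambda>q. n - 1 - q) (\<lambda>q. n - 1 - q) n" by (auto simp: inverse_perms_on_def)
  have S: "sym_mat A (m + n)" and Ps: "psd_mat A (m + n)"
    using A_alpha_join_complete_sym_mat[OF path_graph_adj_commute, of \<alpha> m]
      A_alpha_join_complete_psd[OF path_graph_adj_commute, of \<alpha> m] \<alpha>
    by (simp_all add: A_def path_graph_verts)
  have "quad_form A ?y = quad_form A w"
    using quad_form_permute_tail[OF P w path_graph_verts path_graph_adj_commute path_graph_verts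
        path_graph_adj_commute, of \<alpha>]
      edge_sum_permute[OF P, of \<alpha> "adj (path_graph n)" "\<lambda>q. w $ (m + q)"]
      edge_sum_path_reverse[of \<alpha> n "\<lambda>q. w $ (m + q)"]
    by (simp add: A_def)
  then have "lambda1 A * (?y \<bullet> ?y) \<le> quad_form A ?y"
    using eig w scalar_prod_permute_tail[OF P w] by (simp add: quad_form_def)
  then show ?thesis by (rule eigenvector_of_quad_form_ge_lambda1[OF S N Ps permute_tail_carrier])
qed

text \<open>Adding to the absolute value of a top eigenvector its mirror image gives a
  nonnegative, symmetric top eigenvector, which is positive because the join is connected.\<close>

lemma path_join_perron_exists:
  assumes \<alpha>: "1/2 < \<alpha>" "\<alpha> < 1" and m: "1 \<le> m" and n: "3 \<le> n"
  obtains x where "path_join_perron \<alpha> m n x"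
proof -
  let ?J = "join (complete_graph m) (path_graph n)"
  let ?A = "A_alpha \<alpha> ?J"
  let ?\<rho> = "lambda1 ?A"
  have vJ: "verts ?J = m + n" by (simp add: join_complete_verts path_graph_verts)
  have S: "sym_mat ?A (m + n)"
    using A_alpha_join_complete_sym_mat[OF path_graph_adj_commute, of \<alpha> m] by (simp add: path_graph_verts)
  have N: "0 < m + n" using m by simp
  obtain v where v: "v \<in> carrier_vec (m + n)" "v \<noteq> 0\<^sub>v (m + n)" "?A *\<^sub>v v = ?\<rho> \<cdot>\<^sub>v v"
    using eigenvalue_lambda1[OF S N] sym_mat_carrier[OF S] unfolding eigenvalue_def eigenvector_def
    by auto
  define w where "w = map_vec abs v"
  have w: "w \<in> carrier_vec (m + n)" using v by (simp add: w_def)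
  have w_nonneg: "0 \<le> w $ i" if "i < m + n" for i using that v(1) by (simp add: w_def)
  have Aw: "?A *\<^sub>v w = ?\<rho> \<cdot>\<^sub>v w"
    unfolding w_def
    using lambda1_eigenvector_abs[OF join_complete_adj_commute[OF path_graph_adj_commute]] \<alpha> v(1,3) vJ N
    by simp
  define wr where "wr = permute_tail m n (\<lambda>q. n - 1 - q) w"
  have wr: "wr \<in> carrier_vec (m + n)" by (simp add: wr_def permute_tail_carrier)
  have Awr: "?A *\<^sub>v wr = ?\<rho> \<cdot>\<^sub>v wr"
    unfolding wr_def by (rule path_join_mirror_eigenvector[OF _ _ N w Aw]) (use \<alpha> in auto)
  have wr_head: "wr $ u = w $ u" if "u < m" for u using that by (simp add: wr_def)
  have wr_tail: "wr $ (m + q) = w $ (m + (n - 1 - q))" if "q < n" for q using that by (simp add: wr_def)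
  define x where "x = w + wr"
  have x: "x \<in> carrier_vec (m + n)" using w wr by (simp add: x_def)
  have eig: "?A *\<^sub>v x = ?\<rho> \<cdot>\<^sub>v x"
    using mult_add_distrib_mat_vec[OF sym_mat_carrier[OF S] w wr] Aw Awr
      smult_add_distrib_vec[of w "m + n" wr ?\<rho>] w wr
    by (simp add: x_def)
  have x_tail: "x $ (m + q) = w $ (m + q) + w $ (m + (n - 1 - q))" if "q < n" for q
    using that w wr wr_tail[OF that] by (simp add: x_def)
  have x_ge_w: "w $ i \<le> x $ i" if "i < m + n" for i
  proof (cases "i < m")
    case True
    then show ?thesis using that w wr wr_head w_nonneg by (simp add: x_def)
  next
    case False
    define q where "q = i - m"
    have q: "i = m + q" "q < n" using False that by (auto simp: q_def)
    have "m + (n - 1 - q) < m + n" using q by arith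
    then have "0 \<le> w $ (m + (n - 1 - q))" by (rule w_nonneg)
    then show ?thesis using x_tail[OF q(2)] q by simp
  qed
  have nonneg: "0 \<le> x $ i" if "i < m + n" for i using x_ge_w[OF that] w_nonneg[OF that] by simp
  have "x \<noteq> 0\<^sub>v (m + n)"
  proof
    assume "x = 0\<^sub>v (m + n)"
    moreover obtain i where "i < m + n" "v $ i \<noteq> 0" using v(1,2) by (rule nonzero_vec_index)
    ultimately show False using x_ge_w[of i] v(1) by (simp add: w_def)
  qed
  then have pos: "x $ i > 0" if "i < m + n" for i
    using join_complete_nonneg_eigenvector_pos[of \<alpha> m x "path_graph n" ?\<rho> i] \<alpha> m x nonneg eig that
    by (simp add: path_graph_verts)
  have x_mirror: "x $ (m + q) = x $ (m + (n - 1 - q))" if "q < n" for q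
  proof -
    have "n - 1 - q < n" "n - 1 - (n - 1 - q) = q" using that by arith+
    then show ?thesis using x_tail[OF that] x_tail[of "n - 1 - q"] by simp
  qed
  have "path_join_perron \<alpha> m n x"
    unfolding path_join_perron_def using \<alpha> m n x pos eig x_mirror by blast
  then show ?thesis by (rule that)
qed

theorem mainTheorem18:
  fixes \<alpha> :: real and m n k :: nat
  assumes "1/2 < \<alpha>" and "\<alpha> < 1" and "1 \<le> m"
    and "3 \<le> k" and "k \<le> n - 1"
  shows "lambda1 (A_alpha \<alpha> (join (complete_graph m) (disj_union (cycle_graph k) (path_graph (n - k)))))
       > lambda1 (A_alpha \<alpha> (join (complete_graph m) (path_graph n)))"
proof -
  have kn: "k + 1 \<le> n" and n: "3 \<le> n" using assms by arith+
  obtain x where "path_join_perron \<alpha> m n x" using path_join_perron_exists[OF assms(1-3) n] .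
  then interpret path_join_perron \<alpha> m n x .
  obtain y where y: "y \<in> carrier_vec (m + n)" "quad_form (A' k) y \<ge> \<rho> * (y \<bullet> y)" "A' k *\<^sub>v y \<noteq> \<rho> \<cdot>\<^sub>v y"
    using test_vector[OF assms(4) kn] .
  have "sym_mat (A' k) (m + n)" "psd_mat (A' k) (m + n)"
    using A_alpha_join_complete_sym_mat[OF cycle_path_graph_adj_commute, of \<alpha> m k n]
      A_alpha_join_complete_psd[OF cycle_path_graph_adj_commute, of \<alpha> m k n] alpha kn
    by (simp_all add: cycle_path_graph_verts)
  then show ?thesis using lambda1_gt_of_not_eigenvector[OF _ _ _ y] m_pos by simp
qed

end
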